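(* For every $c>0$ and every local function $\phi$, $$\limsup_{k\to\infty}\ \limsup_{N\to\infty}\ \sup_{f_N:\,D_N(f_N)\le c/N}\ \sum_{\eta\in\Omega}\Big|\frac1{2k+1}\sum_{|z|\le k}\tau_z\phi(\eta)-\tilde\phi\Big(\frac1{2k+1}\sum_{|z|\le k}\eta^z_1,\ \frac1{2k+1}\sum_{|z|\le k}\eta^z_2\Big)\Big|\,f_N(\eta)\,3^{-N}=0,$$ the supremum being over probability densities $f_N$ with respect to $\nu^{1/3}_N$.
   Context: $\mathbb{T}_N=\mathbb{Z}/N\mathbb{Z}$. Configurations $\eta=(\eta^x_\alpha)_{\alpha\in\{0,1,2\},x\in\mathbb{T}_N}$, $\eta^x_\alpha\in\{0,1\}$, $\sum_\alpha\eta^x_\alpha=1$; $\Omega$ the set of configurations ($|\Omega|=3^N$). $\eta^{x,x+1}_{\alpha,\beta}$ = configuration with contents of $x,x+1$ exchanged when $\eta^x_\alpha\eta^{x+1}_\beta=1$ (else $\eta$). $\nu^{1/3}_N$ is the uniform measure on $\Omega$; a probability density is $f_N:\Omega\to[0,\infty)$ with $\sum_\eta f_N(\eta)3^{-N}=1$. Dirichlet form: $D_N(f)=\frac12\sum_{\eta\in\Omega}3^{-N}\sum_{x\in\mathbb{T}_N}\sum_{\alpha,\beta=0}^2\eta^x_\alpha\eta^{x+1}_\beta\big(\sqrt{f(\eta^{x,x+1}_{\alpha,\beta})}-\sqrt{f(\eta)}\big)^2$. A local function $\phi$ depends on finitely many sites, fixed independently of $N$; $\tau_z\phi(\eta)=\phi(\tau_z\eta)$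 with $(\tau_z\eta)^x=\eta^{x+z}$. $\tilde\phi(p_1,p_2)=\mathbb{E}_{\nu^p}[\phi]$ where $\nu^p$ is the product measure with $\nu^p(\eta^x_1=1)=p_1$, $\nu^p(\eta^x_2=1)=p_2$, $\nu^p(\eta^x_0=1)=1-p_1-p_2$. *)

theory Defs
  imports "HOL-Analysis.Analysis" "HOL-Library.Extended_Real"
begin

text \<open>Configurations on the torus Z/NZ: functions int => nat, where the value
  at site x in {0..<N} is the species alpha in {0,1,2} occupying x (i.e. eta^x_alpha = 1),
  and the value is 0 outside {0..<N} (canonical representative).\<close>

definition Omega :: "nat \<Rightarrow> (int \<Rightarrow> nat) set" where
  "Omega N = {\<eta>. \<forall>x. (0 \<le> x \<and> x < int N \<longrightarrow> \<eta> x < 3) \<and>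
                     (\<not> (0 \<le> x \<and> x < int N) \<longrightarrow> \<eta> x = 0)}"

definition swap_sites :: "nat \<Rightarrow> int \<Rightarrow> (int \<Rightarrow> nat) \<Rightarrow> (int \<Rightarrow> nat)" where
  "swap_sites N x \<eta> = \<eta>(x := \<eta> ((x + 1) mod int N), (x + 1) mod int N := \<eta> x)"

definition exch :: "nat \<Rightarrow> int \<Rightarrow> nat \<Rightarrow> nat \<Rightarrow> (int \<Rightarrow> nat) \<Rightarrow> (int \<Rightarrow> nat)" where
  "exch N x \<alpha> \<beta> \<eta> =
     (if \<eta> x = \<alpha> \<and> \<eta> ((x + 1) mod int N) = \<beta> then swap_sites N x \<eta> else \<eta>)"

definition Dirichlet :: "nat \<Rightarrow> ((int \<Rightarrow> nat) \<Rightarrow> real) \<Rightarrow> real" where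
  "Dirichlet N f = (1/2) * (\<Sum>\<eta>\<in>Omega N. (1/3)^N *
      (\<Sum>x\<in>{0..<int N}. \<Sum>\<alpha><3. \<Sum>\<beta><3.
         (if \<eta> x = \<alpha> \<and> \<eta> ((x + 1) mod int N) = \<beta> then 1 else 0) *
         (sqrt (f (exch N x \<alpha> \<beta> \<eta>)) - sqrt (f \<eta>))\<^sup>2))"

definition is_density :: "nat \<Rightarrow> ((int \<Rightarrow> nat) \<Rightarrow> real) \<Rightarrow> bool" where
  "is_density N f \<longleftrightarrow> (\<forall>\<eta>\<in>Omega N. 0 \<le> f \<eta>) \<and> (\<Sum>\<eta>\<in>Omega N. f \<eta> * (1/3)^N) = 1"

definition local_fun :: "int set \<Rightarrow> ((int \<Rightarrow> nat) \<Rightarrow> real) \<Rightarrow> bool" where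
  "local_fun S \<phi> \<longleftrightarrow> finite S \<and> (\<forall>\<eta> \<eta>'. (\<forall>x\<in>S. \<eta> x = \<eta>' x) \<longrightarrow> \<phi> \<eta> = \<phi> \<eta>')"

definition per :: "nat \<Rightarrow> (int \<Rightarrow> nat) \<Rightarrow> (int \<Rightarrow> nat)" where
  "per N \<eta> = (\<lambda>x. \<eta> (x mod int N))"

definition shift :: "int \<Rightarrow> (int \<Rightarrow> nat) \<Rightarrow> (int \<Rightarrow> nat)" where
  "shift z \<eta> = (\<lambda>x. \<eta> (x + z))"

definition site_weight :: "nat \<Rightarrow> real \<Rightarrow> real \<Rightarrow> real" where
  "site_weight a p1 p2 = (if a = 1 then p1 else if a = 2 then p2 else 1 - p1 - p2)"

text \<open>tilde phi (p1,p2) = E_{nu^p}[phi], computed over the (finite) support S of phi.\<close>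
definition phi_tilde :: "int set \<Rightarrow> ((int \<Rightarrow> nat) \<Rightarrow> real) \<Rightarrow> real \<Rightarrow> real \<Rightarrow> real" where
  "phi_tilde S \<phi> p1 p2 =
     (\<Sum>\<sigma>\<in>(S \<rightarrow>\<^sub>E {0,1,2::nat}). \<phi> \<sigma> * (\<Prod>x\<in>S. site_weight (\<sigma> x) p1 p2))"

definition box_avg :: "nat \<Rightarrow> nat \<Rightarrow> ((int \<Rightarrow> nat) \<Rightarrow> real) \<Rightarrow> (int \<Rightarrow> nat) \<Rightarrow> real" where
  "box_avg N k \<phi> \<eta> = (1 / (2 * real k + 1)) *
     (\<Sum>z\<in>{-int k..int k}. \<phi> (shift z (per N \<eta>)))"

definition box_density :: "nat \<Rightarrow> nat \<Rightarrow> nat \<Rightarrow> (int \<Rightarrow> nat) \<Rightarrow> real" where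
  "box_density N k a \<eta> = (1 / (2 * real k + 1)) *
     (\<Sum>z\<in>{-int k..int k}. if per N \<eta> z = a then 1 else 0)"

end

theory Submission
  imports Defs
begin

text \<open>Split the block \<open>{-k..k}\<close> into the sites far from its boundary and the rest; the rest
  contributes \<open>O(1/k)\<close>. A uniformly random permutation \<open>\<pi>\<close> of the block turns the configuration
  inside it into a sample without replacement from its empirical composition, so the inner block
  average of \<open>\<phi>\<close> concentrates around \<open>\<phi>\<tilde>\<close> at the empirical densities, with variance \<open>O(1/k)\<close>.
  It remains to replace \<open>f\<^sub>N\<close> by \<open>f\<^sub>N \<circ> \<pi>\<close>: every \<open>\<pi>\<close> is a product of at most \<open>2k + 1\<close>
  transpositions, each a product of at most \<open>4k\<close> nearest-neighbour exchanges, and by Cauchy--Schwarz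
  one exchange moves \<open>f\<^sub>N\<close> by at most \<open>2\<surd>(2 D\<^sub>N(f\<^sub>N)) \<le> 2\<surd>(2c/N)\<close> in \<open>L\<^sup>1(\<nu>)\<close>, which vanishes as
  \<open>N \<rightarrow> \<infinity>\<close> for fixed \<open>k\<close>.\<close>

section \<open>Moving mass around the torus\<close>

lemma finite_Omega: "finite (Omega N)"
proof -
  have "Omega N = {\<eta>. \<forall>x. (x \<in> {0..<int N} \<longrightarrow> \<eta> x \<in> {..<3}) \<and> (x \<notin> {0..<int N} \<longrightarrow> \<eta> x = 0)}"
    unfolding Omega_def by auto
  then show ?thesis using finite_set_of_finite_funs[of "{0..<int N}" "{..<3::nat}" 0] by simp
qed

lemma Omega_comp_permutes:
  assumes "\<rho> permutes {0..<int N}" "\<eta> \<in> Omega N"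
  shows "\<eta> \<circ> \<rho> \<in> Omega N"
  using assms unfolding Omega_def
  by (auto simp: permutes_not_in) (metis atLeastLessThan_iff permutes_in_image)+

lemma bij_betw_comp_permutes_Omega:
  assumes "\<rho> permutes {0..<int N}"
  shows "bij_betw (\<lambda>\<eta>. \<eta> \<circ> \<rho>) (Omega N) (Omega N)"
proof (rule bij_betwI[where g="\<lambda>\<eta>. \<eta> \<circ> inv \<rho>"])
  have inv: "inv \<rho> permutes {0..<int N}" using assms by (rule permutes_inv)
  show "(\<lambda>\<eta>. \<eta> \<circ> \<rho>) \<in> Omega N \<rightarrow> Omega N" using Omega_comp_permutes[OF assms] by auto
  show "(\<lambda>\<eta>. \<eta> \<circ> inv \<rho>) \<in> Omega N \<rightarrow> Omega N" using Omega_comp_permutes[OF inv] by auto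
  show "\<eta> \<circ> \<rho> \<circ> inv \<rho> = \<eta>" for \<eta>
    using permutes_inverses(1)[OF assms] by (simp add: comp_assoc fun_eq_iff)
  show "\<eta> \<circ> inv \<rho> \<circ> \<rho> = \<eta>" for \<eta>
    using permutes_inverses(2)[OF assms] by (simp add: comp_assoc fun_eq_iff)
qed

lemma sum_Omega_comp_permutes:
  assumes "\<rho> permutes {0..<int N}"
  shows "(\<Sum>\<eta>\<in>Omega N. g (\<eta> \<circ> \<rho>)) = (\<Sum>\<eta>\<in>Omega N. g \<eta>)"
  using sum.reindex_bij_betw[OF bij_betw_comp_permutes_Omega[OF assms], of g] by simp

definition perm_cost :: "nat \<Rightarrow> ((int \<Rightarrow> nat) \<Rightarrow> real) \<Rightarrow> (int \<Rightarrow> int) \<Rightarrow> real" where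
  "perm_cost N f \<rho> = (\<Sum>\<eta>\<in>Omega N. \<bar>f (\<eta> \<circ> \<rho>) - f \<eta>\<bar> * (1/3)^N)"

lemma perm_cost_id: "perm_cost N f id = 0"
  unfolding perm_cost_def by simp

lemma perm_cost_comp_le:
  assumes "\<rho>1 permutes {0..<int N}"
  shows "perm_cost N f (\<rho>1 \<circ> \<rho>2) \<le> perm_cost N f \<rho>1 + perm_cost N f \<rho>2"
proof -
  have "perm_cost N f (\<rho>1 \<circ> \<rho>2) \<le> (\<Sum>\<eta>\<in>Omega N.
      (\<bar>f ((\<eta> \<circ> \<rho>1) \<circ> \<rho>2) - f (\<eta> \<circ> \<rho>1)\<bar> + \<bar>f (\<eta> \<circ> \<rho>1) - f \<eta>\<bar>) * (1/3)^N)"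
    unfolding perm_cost_def by (intro sum_mono mult_right_mono) (auto simp: comp_assoc)
  also have "\<dots> = (\<Sum>\<eta>\<in>Omega N. \<bar>f ((\<eta> \<circ> \<rho>1) \<circ> \<rho>2) - f (\<eta> \<circ> \<rho>1)\<bar> * (1/3)^N) + perm_cost N f \<rho>1"
    unfolding perm_cost_def by (simp add: algebra_simps sum.distrib)
  also have "(\<Sum>\<eta>\<in>Omega N. \<bar>f ((\<eta> \<circ> \<rho>1) \<circ> \<rho>2) - f (\<eta> \<circ> \<rho>1)\<bar> * (1/3)^N) = perm_cost N f \<rho>2"
    unfolding perm_cost_def
    using sum_Omega_comp_permutes[OF assms, of "\<lambda>\<eta>. \<bar>f (\<eta> \<circ> \<rho>2) - f \<eta>\<bar> * (1/3)^N"] by simp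
  finally show ?thesis by (simp add: o_def)
qed

lemma perm_cost_permutes_le:
  assumes "finite Q" "Q \<subseteq> {0..<int N}" "\<rho> permutes Q"
    and "\<And>a b. a \<in> Q \<Longrightarrow> b \<in> Q \<Longrightarrow> perm_cost N f (Transposition.transpose a b) \<le> K"
  shows "perm_cost N f \<rho> \<le> real (card Q) * K"
  using assms
proof (induction Q arbitrary: \<rho> rule: finite_induct)
  case empty
  then show ?case using perm_cost_id[of N f] by (simp add: permutes_empty id_def)
next
  case (insert a F)
  define \<tau> where "\<tau> = Transposition.transpose a (\<rho> a)"
  have \<rho>a: "\<rho> a \<in> insert a F" using permutes_in_image[OF insert.prems(2)] by simp
  have \<tau>: "\<tau> permutes {0..<int N}"
    unfolding \<tau>_def using \<rho>a insert.prems(1) by (intro permutes_swap_id) auto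
  have "\<tau> \<circ> \<rho> permutes F" unfolding \<tau>_def by (rule permutes_insert_lemma[OF insert.prems(2)])
  then have IH: "perm_cost N f (\<tau> \<circ> \<rho>) \<le> real (card F) * K"
    using insert.IH insert.prems by auto
  have "\<rho> = \<tau> \<circ> (\<tau> \<circ> \<rho>)" unfolding \<tau>_def by (simp add: fun_eq_iff)
  then have "perm_cost N f \<rho> \<le> perm_cost N f \<tau> + perm_cost N f (\<tau> \<circ> \<rho>)"
    by (metis perm_cost_comp_le[OF \<tau>])
  also have "\<dots> \<le> K + real (card F) * K"
    using insert.prems(3)[of a "\<rho> a"] \<rho>a IH unfolding \<tau>_def by auto
  finally show ?case using insert.hyps by (simp add: algebra_simps)
qed

lemma sum_comp_permutes_diff_le_perm_cost:
  assumes "\<rho> permutes {0..<int N}" and "\<And>\<eta>. \<eta> \<in> Omega N \<Longrightarrow> \<bar>h \<eta>\<bar> \<le> H"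
  shows "\<bar>(\<Sum>\<eta>\<in>Omega N. h (\<eta> \<circ> \<rho>) * f \<eta> * (1/3)^N) - (\<Sum>\<eta>\<in>Omega N. h \<eta> * f \<eta> * (1/3)^N)\<bar>
    \<le> H * perm_cost N f \<rho>"
proof -
  have "(\<Sum>\<eta>\<in>Omega N. h \<eta> * f \<eta> * (1/3)^N) = (\<Sum>\<eta>\<in>Omega N. h (\<eta> \<circ> \<rho>) * f (\<eta> \<circ> \<rho>) * (1/3)^N)"
    using sum_Omega_comp_permutes[OF assms(1), of "\<lambda>\<eta>. h \<eta> * f \<eta> * (1/3)^N"] by simp
  then have "\<bar>(\<Sum>\<eta>\<in>Omega N. h (\<eta> \<circ> \<rho>) * f \<eta> * (1/3)^N) - (\<Sum>\<eta>\<in>Omega N. h \<eta> * f \<eta> * (1/3)^N)\<bar>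
     = \<bar>\<Sum>\<eta>\<in>Omega N. h (\<eta> \<circ> \<rho>) * (f \<eta> - f (\<eta> \<circ> \<rho>)) * (1/3)^N\<bar>"
    by (simp add: sum_subtractf[symmetric] algebra_simps)
  also have "\<dots> \<le> (\<Sum>\<eta>\<in>Omega N. H * (\<bar>f (\<eta> \<circ> \<rho>) - f \<eta>\<bar> * (1/3)^N))"
  proof (intro order.trans[OF sum_abs] sum_mono)
    fix \<eta> assume "\<eta> \<in> Omega N"
    then have "\<bar>h (\<eta> \<circ> \<rho>)\<bar> \<le> H" using assms Omega_comp_permutes by blast
    then show "\<bar>h (\<eta> \<circ> \<rho>) * (f \<eta> - f (\<eta> \<circ> \<rho>)) * (1/3)^N\<bar> \<le> H * (\<bar>f (\<eta> \<circ> \<rho>) - f \<eta>\<bar> * (1/3)^N)"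
      by (simp add: abs_mult abs_minus_commute mult.assoc mult_right_mono)
  qed
  also have "\<dots> = H * perm_cost N f \<rho>" unfolding perm_cost_def by (simp add: sum_distrib_left)
  finally show ?thesis .
qed

definition bond :: "nat \<Rightarrow> int \<Rightarrow> int \<Rightarrow> int" where
  "bond N x = Transposition.transpose x ((x + 1) mod int N)"

definition bond_energy :: "nat \<Rightarrow> ((int \<Rightarrow> nat) \<Rightarrow> real) \<Rightarrow> int \<Rightarrow> real" where
  "bond_energy N f x = (\<Sum>\<eta>\<in>Omega N. (1/3)^N * (sqrt (f (\<eta> \<circ> bond N x)) - sqrt (f \<eta>))\<^sup>2)"

lemma bond_permutes: "x \<in> {0..<int N} \<Longrightarrow> bond N x permutes {0..<int N}"
  unfolding bond_def by (intro permutes_swap_id) auto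

lemma sum_sum_delta:
  fixes c :: real and n a b :: nat
  assumes "a < n" "b < n"
  shows "(\<Sum>\<alpha><n. \<Sum>\<beta><n. if \<alpha> = a \<and> \<beta> = b then c else 0) = c"
proof -
  have "(\<Sum>\<beta><n. if \<alpha> = a \<and> \<beta> = b then c else 0) = (if \<alpha> = a then c else 0)" for \<alpha>
    using assms(2) by (cases "\<alpha> = a") (simp_all add: sum.delta[of "{..<n}" b "\<lambda>_. c", simplified])
  then show ?thesis using assms(1) by (simp add: sum.delta)
qed

text \<open>Of the nine exchanges \<open>\<eta>\<^sup>x\<^sup>,\<^sup>x\<^sup>+\<^sup>1\<^sub>\<alpha>\<^sub>,\<^sub>\<beta>\<close> at a bond exactly one is active, the plain swap.\<close>

lemma Dirichlet_eq_sum_bond_energy: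
  "Dirichlet N f = 1/2 * (\<Sum>x\<in>{0..<int N}. bond_energy N f x)"
proof -
  have active: "(\<Sum>\<alpha><3. \<Sum>\<beta><3. (if \<eta> x = \<alpha> \<and> \<eta> ((x + 1) mod int N) = \<beta> then 1 else 0) *
         (sqrt (f (exch N x \<alpha> \<beta> \<eta>)) - sqrt (f \<eta>))\<^sup>2) = (sqrt (f (\<eta> \<circ> bond N x)) - sqrt (f \<eta>))\<^sup>2"
    if "\<eta> \<in> Omega N" "x \<in> {0..<int N}" for \<eta> x
  proof -
    have "\<eta> x < 3" "\<eta> ((x + 1) mod int N) < 3" using that unfolding Omega_def by auto
    moreover have "swap_sites N x \<eta> = \<eta> \<circ> bond N x"
      unfolding swap_sites_def bond_def by (auto simp: fun_eq_iff Transposition.transpose_def)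
    moreover have "(\<Sum>\<alpha><3. \<Sum>\<beta><3. (if \<eta> x = \<alpha> \<and> \<eta> ((x + 1) mod int N) = \<beta> then 1 else 0) *
         (sqrt (f (exch N x \<alpha> \<beta> \<eta>)) - sqrt (f \<eta>))\<^sup>2)
       = (\<Sum>\<alpha><3. \<Sum>\<beta><3. if \<alpha> = \<eta> x \<and> \<beta> = \<eta> ((x + 1) mod int N)
           then (sqrt (f (swap_sites N x \<eta>)) - sqrt (f \<eta>))\<^sup>2 else 0)"
      by (intro sum.cong refl) (auto simp: exch_def)
    ultimately show ?thesis using sum_sum_delta by simp
  qed
  have "Dirichlet N f = 1/2 * (\<Sum>\<eta>\<in>Omega N. \<Sum>x\<in>{0..<int N}. (1/3)^N * (sqrt (f (\<eta> \<circ> bond N x)) - sqrt (f \<eta>))\<^sup>2)"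
    unfolding Dirichlet_def by (simp add: active sum_distrib_left)
  then show ?thesis unfolding bond_energy_def by (simp add: sum.swap[of _ "Omega N"])
qed

lemma bond_energy_nonneg: "0 \<le> bond_energy N f x"
  unfolding bond_energy_def by (intro sum_nonneg) auto

lemma bond_energy_le_Dirichlet: "x \<in> {0..<int N} \<Longrightarrow> bond_energy N f x \<le> 2 * Dirichlet N f"
  unfolding Dirichlet_eq_sum_bond_energy
  by (auto intro: member_le_sum bond_energy_nonneg)

lemma Dirichlet_nonneg: "0 \<le> Dirichlet N f"
  unfolding Dirichlet_eq_sum_bond_energy by (simp add: sum_nonneg bond_energy_nonneg)

lemma power2_add_le: "(x + y)\<^sup>2 \<le> 2 * x\<^sup>2 + 2 * (y::real)\<^sup>2"
proof -
  have "(x + y)\<^sup>2 + (x - y)\<^sup>2 = 2 * x\<^sup>2 + 2 * y\<^sup>2" by (simp add: power2_sum power2_diff)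
  then show ?thesis by (metis le_add_same_cancel1 zero_le_power2)
qed

text \<open>Writing \<open>a - b = (\<surd>a - \<surd>b)(\<surd>a + \<surd>b)\<close> and applying Cauchy--Schwarz turns an \<open>L\<^sup>1\<close>-distance
  into the square root of a Dirichlet-type energy.\<close>

lemma sum_abs_diff_le_sqrt_energy:
  fixes a b w :: "'a \<Rightarrow> real"
  assumes "\<And>x. x \<in> A \<Longrightarrow> 0 \<le> a x" "\<And>x. x \<in> A \<Longrightarrow> 0 \<le> b x" "\<And>x. x \<in> A \<Longrightarrow> 0 \<le> w x"
  shows "(\<Sum>x\<in>A. \<bar>a x - b x\<bar> * w x)
    \<le> sqrt (\<Sum>x\<in>A. w x * (sqrt (a x) - sqrt (b x))\<^sup>2) * sqrt (2 * (\<Sum>x\<in>A. a x * w x) + 2 * (\<Sum>x\<in>A. b x * w x))"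
proof -
  define u where "u x = sqrt (w x) * \<bar>sqrt (a x) - sqrt (b x)\<bar>" for x
  define v where "v x = sqrt (w x) * (sqrt (a x) + sqrt (b x))" for x
  have uv: "\<bar>a x - b x\<bar> * w x = u x * v x" if "x \<in> A" for x
  proof -
    have "a x - b x = (sqrt (a x) - sqrt (b x)) * (sqrt (a x) + sqrt (b x))"
      using assms(1,2)[OF that] by (simp add: algebra_simps)
    then have "\<bar>a x - b x\<bar> * w x
        = (\<bar>sqrt (a x) - sqrt (b x)\<bar> * (sqrt (a x) + sqrt (b x))) * (sqrt (w x) * sqrt (w x))"
      using assms[OF that] by (simp add: abs_mult)
    also have "\<dots> = u x * v x" unfolding u_def v_def by (simp only: mult_ac)
    finally show ?thesis .
  qed
  have u2: "(\<Sum>x\<in>A. (u x)\<^sup>2) = (\<Sum>x\<in>A. w x * (sqrt (a x) - sqrt (b x))\<^sup>2)"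
    unfolding u_def using assms(3) by (intro sum.cong) (auto simp: power_mult_distrib)
  have v2: "(\<Sum>x\<in>A. (v x)\<^sup>2) \<le> (\<Sum>x\<in>A. 2 * (a x * w x) + 2 * (b x * w x))"
  proof (intro sum_mono)
    fix x assume x: "x \<in> A"
    have "(v x)\<^sup>2 = w x * (sqrt (a x) + sqrt (b x))\<^sup>2"
      unfolding v_def using assms(3)[OF x] by (simp add: power_mult_distrib)
    also have "\<dots> \<le> w x * (2 * a x + 2 * b x)"
      using power2_add_le[of "sqrt (a x)" "sqrt (b x)"] assms[OF x] by (intro mult_left_mono) simp_all
    finally show "(v x)\<^sup>2 \<le> 2 * (a x * w x) + 2 * (b x * w x)" by (simp add: algebra_simps)
  qed
  have "(\<Sum>x\<in>A. \<bar>a x - b x\<bar> * w x) = (\<Sum>x\<in>A. u x * v x)" using uv by simp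
  also have "\<dots> \<le> sqrt ((\<Sum>x\<in>A. (u x)\<^sup>2) * (\<Sum>x\<in>A. (v x)\<^sup>2))"
    using Cauchy_Schwarz_ineq_sum real_le_rsqrt by blast
  also have "\<dots> \<le> sqrt ((\<Sum>x\<in>A. (u x)\<^sup>2) * (2 * (\<Sum>x\<in>A. a x * w x) + 2 * (\<Sum>x\<in>A. b x * w x)))"
    using v2 by (intro real_sqrt_le_mono mult_left_mono) (auto simp: sum.distrib sum_distrib_left sum_nonneg)
  finally show ?thesis unfolding u2 real_sqrt_mult .
qed

lemma perm_cost_bond_le:
  assumes "is_density N f" "x \<in> {0..<int N}"
  shows "perm_cost N f (bond N x) \<le> 2 * sqrt (2 * Dirichlet N f)"
proof -
  have f: "0 \<le> f \<eta>" "0 \<le> f (\<eta> \<circ> bond N x)" if "\<eta> \<in> Omega N" for \<eta>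
    using assms(1) Omega_comp_permutes[OF bond_permutes[OF assms(2)] that] that
    unfolding is_density_def by auto
  have mass: "(\<Sum>\<eta>\<in>Omega N. f (\<eta> \<circ> bond N x) * (1/3)^N) = 1" "(\<Sum>\<eta>\<in>Omega N. f \<eta> * (1/3)^N) = 1"
    using assms sum_Omega_comp_permutes[OF bond_permutes, of x N "\<lambda>\<eta>. f \<eta> * (1/3)^N"]
    unfolding is_density_def by auto
  have "perm_cost N f (bond N x) \<le> sqrt (bond_energy N f x) *
      sqrt (2 * (\<Sum>\<eta>\<in>Omega N. f (\<eta> \<circ> bond N x) * (1/3)^N) + 2 * (\<Sum>\<eta>\<in>Omega N. f \<eta> * (1/3)^N))"
    unfolding perm_cost_def bond_energy_def by (rule sum_abs_diff_le_sqrt_energy) (use f in auto)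
  also have "\<dots> = sqrt (bond_energy N f x) * 2"
    unfolding mass by (simp add: real_sqrt_four)
  also have "\<dots> \<le> sqrt (2 * Dirichlet N f) * 2"
    using bond_energy_le_Dirichlet[OF assms(2)] by simp
  finally show ?thesis by simp
qed

lemma mod_add_ne_mod:
  fixes z :: int
  assumes "0 < d" "d < int N"
  shows "(z + d) mod int N \<noteq> z mod int N"
proof
  assume "(z + d) mod int N = z mod int N"
  then have "int N dvd d" by (metis add_diff_cancel_left' mod_eq_dvd_iff)
  then show False using assms zdvd_imp_le by fastforce
qed

text \<open>The exchange of \<open>z\<close> and \<open>z + d\<close> is the conjugate of the exchange of \<open>z\<close> and \<open>z + d - 1\<close>
  by a bond, hence costs at most \<open>2d - 1\<close> bond moves.\<close>

lemma perm_cost_transpose_dist_le: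
  assumes bonds: "\<And>x. x \<in> {0..<int N} \<Longrightarrow> perm_cost N f (bond N x) \<le> \<beta>"
    and "1 \<le> d" "d < N"
  shows "perm_cost N f (Transposition.transpose (z mod int N) ((z + int d) mod int N)) \<le> (2 * real d - 1) * \<beta>"
  using assms(2,3)
proof (induction d rule: dec_induct)
  case base
  have "((z mod int N) + 1) mod int N = (z + 1) mod int N" by (simp add: mod_simps)
  then show ?case using bonds[of "z mod int N"] base by (simp add: bond_def)
next
  case (step d)
  define a where "a = z mod int N"
  define b where "b = (z + int d) mod int N"
  define c where "c = (z + int (Suc d)) mod int N"
  have "int N > 0" using step by auto
  then have b_in: "b \<in> {0..<int N}" and ab_perm: "Transposition.transpose a b permutes {0..<int N}"
    unfolding a_def b_def by (auto intro: permutes_swap_id)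
  have "a \<noteq> c" "a \<noteq> b"
    using mod_add_ne_mod[of "int (Suc d)" N z] mod_add_ne_mod[of "int d" N z] step
    unfolding a_def b_def c_def by auto
  moreover have "bond N b = Transposition.transpose c b"
    unfolding bond_def b_def c_def by (simp add: mod_simps ac_simps transpose_commute)
  ultimately have conj: "Transposition.transpose a c = bond N b \<circ> (Transposition.transpose a b \<circ> bond N b)"
    using transpose_comp_triple[of c a b] by (simp add: transpose_commute comp_assoc)
  have "perm_cost N f (Transposition.transpose a c)
      \<le> perm_cost N f (bond N b) + (perm_cost N f (Transposition.transpose a b) + perm_cost N f (bond N b))"
    unfolding conj using perm_cost_comp_le[OF bond_permutes[OF b_in]] perm_cost_comp_le[OF ab_perm]
    by (meson add_left_mono order.trans)
  also have "\<dots> \<le> \<beta> + (2 * real d - 1) * \<beta> + \<beta>"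
    using bonds[OF b_in] step unfolding a_def b_def by simp
  finally show ?case unfolding a_def c_def by (simp add: algebra_simps)
qed

section \<open>Random permutations versus independent sampling\<close>

text \<open>Averaging a function of finitely many coordinates over all permutations of a finite set \<open>B\<close>
  is averaging over injective samples; these differ from independent samples only on a set of
  relative size \<open>|I|\<^sup>2/|B|\<close> (the birthday bound).\<close>

lemma abs_sum_le_card_mult:
  fixes f :: "'a \<Rightarrow> real"
  assumes "\<And>x. x \<in> A \<Longrightarrow> \<bar>f x\<bar> \<le> M"
  shows "\<bar>sum f A\<bar> \<le> real (card A) * M"
  using order.trans[OF sum_abs sum_bounded_above[of A "\<lambda>x. \<bar>f x\<bar>" M]] assms by blast

lemma average_subset_diff_le:
  fixes h :: "'a \<Rightarrow> real"
  assumes "finite V" "W \<subseteq> V" "W \<noteq> {}" "\<And>v. v \<in> V \<Longrightarrow> \<bar>h v\<bar> \<le> M"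
  shows "\<bar>(\<Sum>v\<in>W. h v) / card W - (\<Sum>v\<in>V. h v) / card V\<bar> \<le> 2 * M * card (V - W) / card V"
proof -
  define a where "a = (\<Sum>v\<in>W. h v)"
  define b where "b = (\<Sum>v\<in>V - W. h v)"
  define p where "p = real (card W)"
  define q where "q = real (card (V - W))"
  have "finite W" using assms finite_subset by auto
  then have p: "p > 0" and q: "q \<ge> 0" and V: "real (card V) = p + q"
    unfolding p_def q_def using assms card_Un_disjoint[of W "V - W"]
    by (auto simp: card_gt_0_iff Un_absorb1)
  have sum_V: "(\<Sum>v\<in>V. h v) = a + b" unfolding a_def b_def
    using sum.subset_diff[OF assms(2,1)] by (simp add: add.commute)
  have a: "\<bar>a\<bar> \<le> p * M" and b: "\<bar>b\<bar> \<le> q * M"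
    unfolding a_def b_def p_def q_def using assms(2,4) by (auto intro!: abs_sum_le_card_mult)
  have "\<bar>a * q - b * p\<bar> \<le> \<bar>a\<bar> * q + \<bar>b\<bar> * p"
    using abs_triangle_ineq4[of "a * q" "b * p"] p q by (simp add: abs_mult)
  also have "\<dots> \<le> (p * M) * q + (q * M) * p"
    using a b p q by (intro add_mono mult_right_mono) auto
  finally have "\<bar>a * q - b * p\<bar> \<le> 2 * M * p * q" by (simp add: algebra_simps)
  moreover have "a / p - (a + b) / (p + q) = (a * q - b * p) / (p * (p + q))"
    using p q by (simp add: field_simps)
  moreover have "p * (p + q) > 0" using p q by simp
  ultimately have "\<bar>a / p - (a + b) / (p + q)\<bar> \<le> 2 * M * p * q / (p * (p + q))"
    by (metis abs_divide abs_of_pos divide_right_mono less_imp_le)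
  also have "\<dots> = 2 * M * q / (p + q)" using p q by (simp add: divide_simps)
  finally show ?thesis unfolding a_def[symmetric] p_def[symmetric] q_def[symmetric] V sum_V .
qed

lemma permutes_extend:
  assumes "finite B" "A \<subseteq> B" "inj_on u A" "u ` A \<subseteq> B"
  obtains \<sigma> where "\<sigma> permutes B" "\<And>a. a \<in> A \<Longrightarrow> \<sigma> a = u a"
proof -
  have "finite A" using assms finite_subset by auto
  then have "card (B - A) = card (B - u ` A)"
    using assms by (simp add: card_Diff_subset card_image)
  then obtain g where g: "bij_betw g (B - A) (B - u ` A)"
    using finite_same_card_bij assms(1) by (metis finite_Diff)
  define \<sigma> where "\<sigma> x = (if x \<in> A then u x else if x \<in> B then g x else x)" for x
  have "bij_betw \<sigma> A (u ` A)"
    using assms(3) unfolding bij_betw_def \<sigma>_def inj_on_def by auto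
  moreover have "bij_betw \<sigma> (B - A) (B - u ` A)"
    using g unfolding \<sigma>_def by (rule bij_betw_cong[THEN iffD1, rotated]) auto
  ultimately have "bij_betw \<sigma> (A \<union> (B - A)) (u ` A \<union> (B - u ` A))"
    by (rule bij_betw_combine) auto
  moreover have "A \<union> (B - A) = B" "u ` A \<union> (B - u ` A) = B" using assms by auto
  ultimately have "\<sigma> permutes B"
    by (intro bij_imp_permutes) (auto simp: \<sigma>_def)
  then show ?thesis using that unfolding \<sigma>_def by auto
qed

lemma restrict_eq_iff: "restrict f I = restrict g I \<longleftrightarrow> (\<forall>i\<in>I. f i = g i)"
  by (auto simp: restrict_def fun_eq_iff)

text \<open>Left multiplication by a permutation extending \<open>v \<circ> \<iota>\<^sup>-\<^sup>1\<close> maps the fibre over \<open>\<iota>\<close> onto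
  the fibre over \<open>v\<close>.\<close>

lemma card_fibre_restrict_comp_permutes:
  fixes \<iota> :: "'i \<Rightarrow> 'b"
  assumes "finite B" "inj_on \<iota> I" "\<iota> ` I \<subseteq> B" "v \<in> I \<rightarrow>\<^sub>E B" "inj_on v I"
  shows "card {\<pi>. \<pi> permutes B \<and> restrict (\<pi> \<circ> \<iota>) I = v}
       = card {\<pi>. \<pi> permutes B \<and> restrict (\<pi> \<circ> \<iota>) I = restrict \<iota> I}"
proof -
  have "inj_on (v \<circ> inv_into I \<iota>) (\<iota> ` I)"
    using assms(2,5) by (simp add: comp_inj_on inj_on_inv_into inv_into_image_cancel)
  moreover have "(v \<circ> inv_into I \<iota>) ` \<iota> ` I \<subseteq> B"
    using assms(2,4) by (auto simp: PiE_iff)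
  ultimately obtain \<sigma> where \<sigma>: "\<sigma> permutes B" "\<And>x. x \<in> \<iota> ` I \<Longrightarrow> \<sigma> x = (v \<circ> inv_into I \<iota>) x"
    using permutes_extend[OF assms(1,3)] by blast
  have \<sigma>\<iota>: "\<sigma> (\<iota> i) = v i" if "i \<in> I" for i
    using \<sigma>(2)[of "\<iota> i"] assms(2) that by simp
  have inv: "inv \<sigma> (\<sigma> x) = x" "\<sigma> (inv \<sigma> x) = x" for x
    using permutes_inverses[OF \<sigma>(1)] by auto
  define F where "F w = {\<pi>. \<pi> permutes B \<and> (\<forall>i\<in>I. \<pi> (\<iota> i) = w i)}" for w
  have "bij_betw (\<lambda>\<pi>. inv \<sigma> \<circ> \<pi>) (F v) (F \<iota>)"
  proof (rule bij_betwI[where g="\<lambda>\<pi>. \<sigma> \<circ> \<pi>"])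
    show "(\<lambda>\<pi>. inv \<sigma> \<circ> \<pi>) \<in> F v \<rightarrow> F \<iota>"
      unfolding F_def using \<sigma>\<iota> inv permutes_compose[OF _ permutes_inv[OF \<sigma>(1)]] by (auto simp: \<sigma>\<iota>[symmetric])
    show "(\<lambda>\<pi>. \<sigma> \<circ> \<pi>) \<in> F \<iota> \<rightarrow> F v"
      unfolding F_def using \<sigma>\<iota> permutes_compose[OF _ \<sigma>(1)] by auto
  qed (simp_all add: fun_eq_iff inv)
  moreover have "restrict (\<pi> \<circ> \<iota>) I = v \<longleftrightarrow> (\<forall>i\<in>I. \<pi> (\<iota> i) = v i)" for \<pi>
    using restrict_eq_iff[of "\<pi> \<circ> \<iota>" I v] assms(4) by (simp add: PiE_iff extensional_restrict)
  ultimately show ?thesis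
    unfolding restrict_eq_iff by (simp add: F_def bij_betw_same_card[symmetric])
qed

lemma average_permutations_eq_average_inj:
  fixes \<iota> :: "'i \<Rightarrow> 'b" and h :: "('i \<Rightarrow> 'b) \<Rightarrow> real"
  assumes "finite B" "finite I" "inj_on \<iota> I" "\<iota> ` I \<subseteq> B"
    and local: "\<And>v v'. (\<forall>i\<in>I. v i = v' i) \<Longrightarrow> h v = h v'"
  defines "Inj \<equiv> {v \<in> I \<rightarrow>\<^sub>E B. inj_on v I}"
  shows "(\<Sum>\<pi>\<in>{\<pi>. \<pi> permutes B}. h (\<pi> \<circ> \<iota>)) / card {\<pi>. \<pi> permutes B} = (\<Sum>v\<in>Inj. h v) / card Inj"
proof -
  define Perm where "Perm = {\<pi>. \<pi> permutes B}"
  define \<Phi> where "\<Phi> \<pi> = restrict (\<pi> \<circ> \<iota>) I" for \<pi> :: "'b \<Rightarrow> 'b"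
  define K where "K = card {\<pi>. \<pi> permutes B \<and> restrict (\<pi> \<circ> \<iota>) I = restrict \<iota> I}"
  have fin: "finite Perm" "finite Inj"
    unfolding Perm_def Inj_def using assms(1,2) by (simp_all add: finite_permutations finite_PiE)
  have \<Phi>_Inj: "\<Phi> \<pi> \<in> Inj" if "\<pi> \<in> Perm" for \<pi>
  proof -
    have \<pi>: "\<pi> permutes B" using that unfolding Perm_def by simp
    then have "inj_on (\<pi> \<circ> \<iota>) I"
      using assms(3) permutes_inj by (blast intro: comp_inj_on inj_on_subset)
    moreover have "\<pi> (\<iota> i) \<in> B" if "i \<in> I" for i
      using that assms(4) permutes_in_image[OF \<pi>] by auto
    ultimately show ?thesis unfolding Inj_def \<Phi>_def by (auto simp: inj_on_def)
  qed
  have "id \<in> {\<pi>. \<pi> permutes B \<and> restrict (\<pi> \<circ> \<iota>) I = restrict \<iota> I}" by (simp add: permutes_id)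
  moreover have "finite {\<pi>. \<pi> permutes B \<and> restrict (\<pi> \<circ> \<iota>) I = restrict \<iota> I}"
    by (rule finite_subset[OF _ finite_permutations[OF assms(1)]]) auto
  ultimately have K: "K > 0" unfolding K_def using card_gt_0_iff by blast
  have grouped: "(\<Sum>\<pi>\<in>Perm. g (\<Phi> \<pi>)) = real K * (\<Sum>v\<in>Inj. g v)" for g :: "('i \<Rightarrow> 'b) \<Rightarrow> real"
  proof -
    have "(\<Sum>\<pi>\<in>Perm. g (\<Phi> \<pi>)) = (\<Sum>v\<in>Inj. \<Sum>\<pi>\<in>{\<pi> \<in> Perm. \<Phi> \<pi> = v}. g (\<Phi> \<pi>))"
      by (rule sum.group[symmetric]) (use fin \<Phi>_Inj in auto)
    also have "\<dots> = (\<Sum>v\<in>Inj. real K * g v)"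
    proof (rule sum.cong[OF refl])
      fix v assume "v \<in> Inj"
      then have "card {\<pi> \<in> Perm. \<Phi> \<pi> = v} = K"
        using card_fibre_restrict_comp_permutes[OF assms(1,3,4)] unfolding K_def Inj_def Perm_def \<Phi>_def
        by simp
      then show "(\<Sum>\<pi>\<in>{\<pi> \<in> Perm. \<Phi> \<pi> = v}. g (\<Phi> \<pi>)) = real K * g v" by simp
    qed
    finally show ?thesis by (simp add: sum_distrib_left)
  qed
  have "h (\<pi> \<circ> \<iota>) = h (\<Phi> \<pi>)" for \<pi> unfolding \<Phi>_def by (rule local) simp
  then have "(\<Sum>\<pi>\<in>Perm. h (\<pi> \<circ> \<iota>)) = real K * (\<Sum>v\<in>Inj. h v)"
    using grouped[of h] by simp
  moreover have "real (card Perm) = real K * real (card Inj)"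
    using grouped[of "\<lambda>_. 1"] by simp
  ultimately show ?thesis using K unfolding Perm_def by simp
qed

lemma card_PiE_eq_at_le:
  assumes "finite B" "finite I" "a \<in> I" "b \<in> I" "a \<noteq> b"
  shows "card {v \<in> I \<rightarrow>\<^sub>E B. v a = v b} \<le> card B ^ (card I - 1)"
proof -
  define E where "E = {v \<in> I \<rightarrow>\<^sub>E B. v a = v b}"
  have "inj_on (\<lambda>v. restrict v (I - {b})) E"
  proof (rule inj_onI)
    fix v w assume "v \<in> E" "w \<in> E" "restrict v (I - {b}) = restrict w (I - {b})"
    then have "\<forall>i\<in>I. v i = w i" "v \<in> extensional I" "w \<in> extensional I"
      using assms(3,5) unfolding E_def restrict_eq_iff by (auto simp: PiE_iff)
    then show "v = w" by (auto intro: extensionalityI)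
  qed
  moreover have "(\<lambda>v. restrict v (I - {b})) ` E \<subseteq> (I - {b}) \<rightarrow>\<^sub>E B"
  proof (rule image_subsetI)
    fix v assume "v \<in> E"
    then have "\<forall>i\<in>I - {b}. v i \<in> B" unfolding E_def by (auto simp: PiE_iff)
    then show "restrict v (I - {b}) \<in> (I - {b}) \<rightarrow>\<^sub>E B" by (simp only: restrict_PiE_iff)
  qed
  ultimately have "card E \<le> card ((I - {b}) \<rightarrow>\<^sub>E B)"
    using assms(1,2) by (intro card_inj_on_le) (auto simp: finite_PiE)
  also have "\<dots> = card B ^ (card I - 1)" using assms by (simp add: card_PiE)
  finally show ?thesis unfolding E_def .
qed

lemma card_PiE_not_inj_le:
  assumes "finite B" "finite I"
  shows "card ((I \<rightarrow>\<^sub>E B) - {v \<in> I \<rightarrow>\<^sub>E B. inj_on v I}) * card B \<le> card I ^ 2 * card B ^ card I"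
proof (cases "I = {}")
  case True
  then show ?thesis by simp
next
  case False
  define E where "E a b = {v \<in> I \<rightarrow>\<^sub>E B. v a = v b}" for a b
  have "(I \<rightarrow>\<^sub>E B) - {v \<in> I \<rightarrow>\<^sub>E B. inj_on v I} \<subseteq> (\<Union>a\<in>I. \<Union>b\<in>I - {a}. E a b)"
    unfolding inj_on_def E_def by auto
  then have "card ((I \<rightarrow>\<^sub>E B) - {v \<in> I \<rightarrow>\<^sub>E B. inj_on v I}) \<le> card (\<Union>a\<in>I. \<Union>b\<in>I - {a}. E a b)"
    using assms unfolding E_def by (intro card_mono) (auto simp: finite_PiE)
  also have "\<dots> \<le> (\<Sum>a\<in>I. \<Sum>b\<in>I - {a}. card (E a b))"
    using assms(2) by (intro order.trans[OF card_UN_le] sum_mono card_UN_le) auto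
  also have "\<dots> \<le> (\<Sum>a\<in>I. \<Sum>b\<in>I - {a}. card B ^ (card I - 1))"
    unfolding E_def using assms by (intro sum_mono card_PiE_eq_at_le) auto
  also have "\<dots> \<le> (\<Sum>a\<in>I. \<Sum>b\<in>I. card B ^ (card I - 1))"
    using assms(2) by (intro sum_mono sum_mono2) auto
  also have "\<dots> = card I ^ 2 * card B ^ (card I - 1)" by (simp add: power2_eq_square)
  finally have "card ((I \<rightarrow>\<^sub>E B) - {v \<in> I \<rightarrow>\<^sub>E B. inj_on v I}) * card B
      \<le> card I ^ 2 * (card B ^ (card I - 1) * card B)"
    by (simp add: mult.assoc)
  also have "card B ^ (card I - 1) * card B = card B ^ card I"
  proof -
    have "card I = Suc (card I - 1)" using False assms(2) by (simp add: card_gt_0_iff)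
    then show ?thesis by (metis power_Suc2)
  qed
  finally show ?thesis .
qed

lemma average_permutations_approx_PiE:
  fixes \<iota> :: "'i \<Rightarrow> 'b" and h :: "('i \<Rightarrow> 'b) \<Rightarrow> real"
  assumes "finite B" "B \<noteq> {}" "finite I" "inj_on \<iota> I" "\<iota> ` I \<subseteq> B"
    and local: "\<And>v v'. (\<forall>i\<in>I. v i = v' i) \<Longrightarrow> h v = h v'"
    and bounded: "\<And>v. v \<in> I \<rightarrow>\<^sub>E B \<Longrightarrow> \<bar>h v\<bar> \<le> M"
  shows "\<bar>(\<Sum>\<pi>\<in>{\<pi>. \<pi> permutes B}. h (\<pi> \<circ> \<iota>)) / fact (card B) - (\<Sum>v\<in>I \<rightarrow>\<^sub>E B. h v) / card B ^ card I\<bar>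
      \<le> 2 * M * card I ^ 2 / card B"
proof -
  define V where "V = I \<rightarrow>\<^sub>E B"
  define Inj where "Inj = {v \<in> V. inj_on v I}"
  have B: "real (card B) > 0" using assms(1,2) by (simp add: card_gt_0_iff)
  have V: "finite V" "real (card V) = real (card B) ^ card I"
    unfolding V_def using assms(1,3) by (simp_all add: card_PiE finite_PiE)
  have "restrict \<iota> I \<in> Inj" unfolding Inj_def V_def using assms(4,5) by (auto simp: inj_on_def)
  then have Inj: "Inj \<subseteq> V" "Inj \<noteq> {}" unfolding Inj_def by auto
  then have M: "M \<ge> 0" using bounded unfolding V_def by (meson abs_ge_zero order.trans subsetD ex_in_conv)
  have "(\<Sum>\<pi>\<in>{\<pi>. \<pi> permutes B}. h (\<pi> \<circ> \<iota>)) / fact (card B) = (\<Sum>v\<in>Inj. h v) / card Inj"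
    using average_permutations_eq_average_inj[OF assms(1,3,4,5) local] card_permutations[OF refl assms(1)]
    unfolding Inj_def V_def by simp
  moreover have "\<bar>(\<Sum>v\<in>Inj. h v) / card Inj - (\<Sum>v\<in>V. h v) / card V\<bar> \<le> 2 * M * card (V - Inj) / card V"
    by (rule average_subset_diff_le[OF V(1) Inj]) (use bounded V_def in auto)
  moreover have "real (card (V - Inj)) / card V \<le> real (card I ^ 2) / card B"
  proof -
    have "real (card (V - Inj) * card B) \<le> real (card I ^ 2 * card B ^ card I)"
      using card_PiE_not_inj_le[OF assms(1,3)] unfolding V_def Inj_def by (rule of_nat_mono)
    then have "real (card (V - Inj)) * card B \<le> real (card I ^ 2) * card V"
      using V(2) by simp
    moreover have "real (card V) > 0" using V(2) B by simp
    ultimately show ?thesis using B by (simp add: field_simps)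
  qed
  then have "2 * M * (card (V - Inj) / card V) \<le> 2 * M * (card I ^ 2 / card B)"
    using M by (intro mult_left_mono) auto
  ultimately show ?thesis using V(2) unfolding V_def by simp
qed

section \<open>Local functions sampled from a box\<close>

definition three_valued :: "(int \<Rightarrow> nat) \<Rightarrow> bool" where
  "three_valued \<xi> \<longleftrightarrow> (\<forall>z. \<xi> z < 3)"

definition emp_density :: "nat \<Rightarrow> (int \<Rightarrow> nat) \<Rightarrow> nat \<Rightarrow> real" where
  "emp_density k \<xi> a = (1 / (2 * real k + 1)) * (\<Sum>z\<in>{-int k..int k}. if \<xi> z = a then 1 else 0)"

definition phi_tilde_emp :: "int set \<Rightarrow> ((int \<Rightarrow> nat) \<Rightarrow> real) \<Rightarrow> nat \<Rightarrow> (int \<Rightarrow> nat) \<Rightarrow> real" where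
  "phi_tilde_emp S \<phi> k \<xi> = phi_tilde S \<phi> (emp_density k \<xi> 1) (emp_density k \<xi> 2)"

definition phi_norm :: "int set \<Rightarrow> ((int \<Rightarrow> nat) \<Rightarrow> real) \<Rightarrow> real" where
  "phi_norm S \<phi> = (\<Sum>t\<in>S \<rightarrow>\<^sub>E {0,1,2}. \<bar>\<phi> t\<bar>)"

lemma nat_less_3_iff: "(n::nat) < 3 \<longleftrightarrow> n \<in> {0,1,2}"
  by (simp add: numeral_3_eq_3 numeral_2_eq_2 less_Suc_eq)

context
  fixes S :: "int set" and \<phi> :: "(int \<Rightarrow> nat) \<Rightarrow> real"
  assumes local: "local_fun S \<phi>"
begin

lemma local_fun_finite: "finite S"
  using local unfolding local_fun_def by simp

lemma local_fun_cong: "(\<And>x. x \<in> S \<Longrightarrow> \<sigma> x = \<sigma>' x) \<Longrightarrow> \<phi> \<sigma> = \<phi> \<sigma>'"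
  using local unfolding local_fun_def by blast

lemma abs_le_phi_norm:
  assumes "\<And>s. s \<in> S \<Longrightarrow> \<sigma> s < 3"
  shows "\<bar>\<phi> \<sigma>\<bar> \<le> phi_norm S \<phi>"
proof -
  have "restrict \<sigma> S \<in> S \<rightarrow>\<^sub>E {0,1,2}"
    using assms by (simp add: PiE_iff nat_less_3_iff)
  then have "\<bar>\<phi> (restrict \<sigma> S)\<bar> \<le> phi_norm S \<phi>"
    unfolding phi_norm_def using local_fun_finite
    by (intro member_le_sum[where f="\<lambda>t. \<bar>\<phi> t\<bar>"]) (auto simp: finite_PiE)
  moreover have "\<phi> \<sigma> = \<phi> (restrict \<sigma> S)" by (rule local_fun_cong) simp
  ultimately show ?thesis by simp
qed

lemma abs_comp_le_phi_norm: "three_valued \<xi> \<Longrightarrow> \<bar>\<phi> (\<xi> \<circ> v)\<bar> \<le> phi_norm S \<phi>"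
  unfolding three_valued_def by (intro abs_le_phi_norm) simp

lemma phi_norm_nonneg: "phi_norm S \<phi> \<ge> 0"
  unfolding phi_norm_def by (intro sum_nonneg) auto

end

lemma sum_PiE_comp_eq_sum_patterns:
  fixes \<xi> :: "'b \<Rightarrow> nat" and \<psi> :: "('i \<Rightarrow> nat) \<Rightarrow> real"
  assumes "finite I" "finite B" "\<And>b. b \<in> B \<Longrightarrow> \<xi> b < 3"
    and local: "\<And>u u'. (\<forall>i\<in>I. u i = u' i) \<Longrightarrow> \<psi> u = \<psi> u'"
  shows "(\<Sum>v\<in>I \<rightarrow>\<^sub>E B. \<psi> (\<xi> \<circ> v)) = (\<Sum>t\<in>I \<rightarrow>\<^sub>E {0,1,2}. \<psi> t * (\<Prod>i\<in>I. real (card {b\<in>B. \<xi> b = t i})))"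
proof -
  define \<Phi> where "\<Phi> v = restrict (\<xi> \<circ> v) I" for v
  have fin: "finite (I \<rightarrow>\<^sub>E B)" "finite (I \<rightarrow>\<^sub>E {0::nat,1,2})"
    using assms(1,2) by (simp_all add: finite_PiE)
  have img: "\<Phi> ` (I \<rightarrow>\<^sub>E B) \<subseteq> I \<rightarrow>\<^sub>E {0::nat,1,2}"
  proof (rule image_subsetI)
    fix v assume "v \<in> I \<rightarrow>\<^sub>E B"
    then show "\<Phi> v \<in> I \<rightarrow>\<^sub>E {0,1,2}"
      using assms(3) unfolding \<Phi>_def by (simp add: PiE_iff nat_less_3_iff)
  qed
  have fibre: "{v \<in> I \<rightarrow>\<^sub>E B. \<Phi> v = t} = PiE I (\<lambda>i. {b\<in>B. \<xi> b = t i})" if t: "t \<in> I \<rightarrow>\<^sub>E {0,1,2}" for t :: "'i \<Rightarrow> nat"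
  proof -
    have "\<Phi> v = t \<longleftrightarrow> (\<forall>i\<in>I. \<xi> (v i) = t i)" for v
      using restrict_eq_iff[of "\<xi> \<circ> v" I t] PiE_restrict[OF t] unfolding \<Phi>_def by simp
    then show ?thesis unfolding set_eq_iff PiE_iff by blast
  qed
  have "(\<Sum>v\<in>I \<rightarrow>\<^sub>E B. \<psi> (\<xi> \<circ> v)) = (\<Sum>v\<in>I \<rightarrow>\<^sub>E B. \<psi> (\<Phi> v))"
    unfolding \<Phi>_def by (rule sum.cong[OF refl], rule local) simp
  also have "\<dots> = (\<Sum>t\<in>I \<rightarrow>\<^sub>E {0,1,2}. \<Sum>v\<in>{v \<in> I \<rightarrow>\<^sub>E B. \<Phi> v = t}. \<psi> (\<Phi> v))"
    by (rule sum.group[OF fin img, symmetric])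
  also have "\<dots> = (\<Sum>t\<in>I \<rightarrow>\<^sub>E {0,1,2}. \<psi> t * (\<Prod>i\<in>I. real (card {b\<in>B. \<xi> b = t i})))"
  proof (rule sum.cong[OF refl])
    fix t :: "'i \<Rightarrow> nat" assume t: "t \<in> I \<rightarrow>\<^sub>E {0,1,2}"
    have "(\<Sum>v\<in>{v \<in> I \<rightarrow>\<^sub>E B. \<Phi> v = t}. \<psi> (\<Phi> v)) = real (card {v \<in> I \<rightarrow>\<^sub>E B. \<Phi> v = t}) * \<psi> t"
      by simp
    also have "card {v \<in> I \<rightarrow>\<^sub>E B. \<Phi> v = t} = (\<Prod>i\<in>I. card {b\<in>B. \<xi> b = t i})"
      unfolding fibre[OF t] using assms(1) by (rule card_PiE)
    finally show "(\<Sum>v\<in>{v \<in> I \<rightarrow>\<^sub>E B. \<Phi> v = t}. \<psi> (\<Phi> v)) = \<psi> t * (\<Prod>i\<in>I. real (card {b\<in>B. \<xi> b = t i}))"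
      by simp
  qed
  finally show ?thesis .
qed

lemma sum_PiE_Plus_mult:
  fixes g h :: "('i \<Rightarrow> 'b) \<Rightarrow> real"
  shows "(\<Sum>v\<in>(I <+> J) \<rightarrow>\<^sub>E B. g (restrict (v \<circ> Inl) I) * h (restrict (v \<circ> Inr) J))
       = (\<Sum>u\<in>I \<rightarrow>\<^sub>E B. g u) * (\<Sum>w\<in>J \<rightarrow>\<^sub>E B. h w)"
proof -
  define halves where "halves v = (restrict (v \<circ> Inl) I, restrict (v \<circ> Inr) J)" for v :: "'i + 'i \<Rightarrow> 'b"
  have "bij_betw halves ((I <+> J) \<rightarrow>\<^sub>E B) ((I \<rightarrow>\<^sub>E B) \<times> (J \<rightarrow>\<^sub>E B))"
  proof (rule bij_betwI[where g="\<lambda>(u, w). restrict (case_sum u w) (I <+> J)"])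
    show "halves \<in> ((I <+> J) \<rightarrow>\<^sub>E B) \<rightarrow> (I \<rightarrow>\<^sub>E B) \<times> (J \<rightarrow>\<^sub>E B)"
      unfolding halves_def by (auto simp: PiE_iff)
    show "(\<lambda>(u, w). restrict (case_sum u w) (I <+> J)) \<in> (I \<rightarrow>\<^sub>E B) \<times> (J \<rightarrow>\<^sub>E B) \<rightarrow> ((I <+> J) \<rightarrow>\<^sub>E B)"
      by (auto simp: PiE_iff split: sum.split)
    show "(\<lambda>(u, w). restrict (case_sum u w) (I <+> J)) (halves v) = v" if "v \<in> (I <+> J) \<rightarrow>\<^sub>E B" for v
      using that unfolding halves_def by (auto simp: fun_eq_iff PiE_iff extensional_def split: sum.split)
    show "halves ((\<lambda>(u, w). restrict (case_sum u w) (I <+> J)) p) = p" if "p \<in> (I \<rightarrow>\<^sub>E B) \<times> (J \<rightarrow>\<^sub>E B)" for p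
      using that unfolding halves_def by (auto simp: fun_eq_iff PiE_iff extensional_def)
  qed
  then have "(\<Sum>v\<in>(I <+> J) \<rightarrow>\<^sub>E B. (\<lambda>(u, w). g u * h w) (halves v))
      = (\<Sum>p\<in>(I \<rightarrow>\<^sub>E B) \<times> (J \<rightarrow>\<^sub>E B). (\<lambda>(u, w). g u * h w) p)"
    by (rule sum.reindex_bij_betw)
  then show ?thesis by (simp add: halves_def sum_product sum.cartesian_product)
qed

lemma emp_density_eq_card:
  "emp_density k \<xi> a = real (card {b\<in>{-int k..int k}. \<xi> b = a}) / (2 * real k + 1)"
  unfolding emp_density_def by (simp add: sum.If_cases Int_def)

lemma emp_density_sum:
  assumes "three_valued \<xi>"
  shows "emp_density k \<xi> 0 + emp_density k \<xi> 1 + emp_density k \<xi> 2 = 1"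
proof -
  define ind where "ind a z = (if \<xi> z = a then 1 else 0 :: real)" for a z
  have "ind 0 z + ind 1 z + ind 2 z = 1" for z
  proof -
    have "\<xi> z \<in> {0,1,2}" using assms nat_less_3_iff unfolding three_valued_def by blast
    then show ?thesis by (auto simp: ind_def)
  qed
  then have "(\<Sum>z\<in>{-int k..int k}. ind 0 z) + (\<Sum>z\<in>{-int k..int k}. ind 1 z) + (\<Sum>z\<in>{-int k..int k}. ind 2 z)
      = 2 * real k + 1"
    by (simp add: sum.distrib[symmetric])
  then show ?thesis unfolding emp_density_def ind_def[symmetric] by (simp add: add_divide_distrib[symmetric])
qed

lemma site_weight_emp_density:
  "three_valued \<xi> \<Longrightarrow> a \<in> {0,1,2} \<Longrightarrow>
    site_weight a (emp_density k \<xi> 1) (emp_density k \<xi> 2) = emp_density k \<xi> a"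
  using emp_density_sum[of \<xi> k] unfolding site_weight_def by auto

context
  fixes S :: "int set" and \<phi> :: "(int \<Rightarrow> nat) \<Rightarrow> real"
  assumes local: "local_fun S \<phi>"
begin

text \<open>Sampling the sites of \<open>S\<close> independently and uniformly from the box reproduces \<open>\<nu>\<^sup>p\<close> with
  \<open>p\<close> the empirical densities of the box.\<close>

lemma sum_PiE_box_local_fun:
  assumes "three_valued \<xi>"
  shows "(\<Sum>v\<in>S \<rightarrow>\<^sub>E {-int k..int k}. \<phi> (\<xi> \<circ> v)) = (2 * real k + 1) ^ card S * phi_tilde_emp S \<phi> k \<xi>"
proof -
  have "(\<Sum>v\<in>S \<rightarrow>\<^sub>E {-int k..int k}. \<phi> (\<xi> \<circ> v))
      = (\<Sum>t\<in>S \<rightarrow>\<^sub>E {0,1,2}. \<phi> t * (\<Prod>s\<in>S. real (card {b\<in>{-int k..int k}. \<xi> b = t s})))"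
  proof (rule sum_PiE_comp_eq_sum_patterns)
    show "\<phi> u = \<phi> u'" if "\<forall>i\<in>S. u i = u' i" for u u'
      using that by (intro local_fun_cong[OF local]) simp
  qed (use assms local_fun_finite[OF local] in \<open>simp_all add: three_valued_def\<close>)
  also have "\<dots> = (\<Sum>t\<in>S \<rightarrow>\<^sub>E {0,1,2}. \<phi> t * ((2 * real k + 1) ^ card S *
      (\<Prod>s\<in>S. site_weight (t s) (emp_density k \<xi> 1) (emp_density k \<xi> 2))))"
  proof (intro sum.cong refl arg_cong[where f="\<lambda>x. \<phi> _ * x"])
    fix t :: "int \<Rightarrow> nat" assume t: "t \<in> S \<rightarrow>\<^sub>E {0,1,2}"
    have "(\<Prod>s\<in>S. site_weight (t s) (emp_density k \<xi> 1) (emp_density k \<xi> 2))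
        = (\<Prod>s\<in>S. emp_density k \<xi> (t s))"
      by (rule prod.cong[OF refl], rule site_weight_emp_density[OF assms PiE_mem[OF t]])
    also have "\<dots> = (\<Prod>s\<in>S. real (card {b\<in>{-int k..int k}. \<xi> b = t s})) / (2 * real k + 1) ^ card S"
      by (simp add: emp_density_eq_card prod_dividef)
    finally have "(\<Prod>s\<in>S. site_weight (t s) (emp_density k \<xi> 1) (emp_density k \<xi> 2))
        = (\<Prod>s\<in>S. real (card {b\<in>{-int k..int k}. \<xi> b = t s})) / (2 * real k + 1) ^ card S" .
    then show "(\<Prod>s\<in>S. real (card {b\<in>{-int k..int k}. \<xi> b = t s}))
        = (2 * real k + 1) ^ card S * (\<Prod>s\<in>S. site_weight (t s) (emp_density k \<xi> 1) (emp_density k \<xi> 2))"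
      by simp
  qed
  also have "\<dots> = (2 * real k + 1) ^ card S * phi_tilde_emp S \<phi> k \<xi>"
    unfolding phi_tilde_emp_def phi_tilde_def by (simp add: sum_distrib_left mult.left_commute)
  finally show ?thesis .
qed

lemma sum_PiE_box_local_fun_product:
  assumes "three_valued \<xi>"
  shows "(\<Sum>v\<in>(S <+> S) \<rightarrow>\<^sub>E {-int k..int k}. \<phi> (\<xi> \<circ> v \<circ> Inl) * \<phi> (\<xi> \<circ> v \<circ> Inr))
       = (2 * real k + 1) ^ card (S <+> S) * (phi_tilde_emp S \<phi> k \<xi>)\<^sup>2"
proof -
  have "\<phi> (\<xi> \<circ> v \<circ> Inl) * \<phi> (\<xi> \<circ> v \<circ> Inr)
      = \<phi> (\<xi> \<circ> restrict (v \<circ> Inl) S) * \<phi> (\<xi> \<circ> restrict (v \<circ> Inr) S)" for v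
    by (intro arg_cong2[where f="(*)"] local_fun_cong[OF local]) simp_all
  then have "(\<Sum>v\<in>(S <+> S) \<rightarrow>\<^sub>E {-int k..int k}. \<phi> (\<xi> \<circ> v \<circ> Inl) * \<phi> (\<xi> \<circ> v \<circ> Inr))
      = (\<Sum>v\<in>S \<rightarrow>\<^sub>E {-int k..int k}. \<phi> (\<xi> \<circ> v))\<^sup>2"
    using sum_PiE_Plus_mult[where g="\<lambda>u. \<phi> (\<xi> \<circ> u)" and h="\<lambda>u. \<phi> (\<xi> \<circ> u)"
        and I=S and J=S and B="{-int k..int k}"]
    by (simp add: power2_eq_square)
  also have "\<dots> = (2 * real k + 1) ^ card (S <+> S) * (phi_tilde_emp S \<phi> k \<xi>)\<^sup>2"
    unfolding sum_PiE_box_local_fun[OF assms] using local_fun_finite[OF local]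
    by (simp add: card_Plus power_mult_distrib power_add power2_eq_square)
  finally show ?thesis .
qed

end

section \<open>Averages over random permutations of a box\<close>

definition perm_avg :: "nat \<Rightarrow> ((int \<Rightarrow> int) \<Rightarrow> real) \<Rightarrow> real" where
  "perm_avg k g = (\<Sum>\<pi>\<in>{\<pi>. \<pi> permutes {-int k..int k}}. g \<pi>) / fact (2 * k + 1)"

lemma card_permutations_box: "card {\<pi>. \<pi> permutes {-int k..int k}} = fact (2 * k + 1)"
  by (rule card_permutations) auto

lemma perm_avg_add: "perm_avg k (\<lambda>\<pi>. f \<pi> + g \<pi>) = perm_avg k f + perm_avg k g"
  unfolding perm_avg_def by (simp add: sum.distrib add_divide_distrib)

lemma perm_avg_diff: "perm_avg k (\<lambda>\<pi>. f \<pi> - g \<pi>) = perm_avg k f - perm_avg k g"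
  unfolding perm_avg_def by (simp add: sum_subtractf diff_divide_distrib)

lemma perm_avg_cmult: "perm_avg k (\<lambda>\<pi>. c * f \<pi>) = c * perm_avg k f"
  unfolding perm_avg_def by (simp add: sum_distrib_left)

lemma perm_avg_mult_right: "perm_avg k (\<lambda>\<pi>. f \<pi> * c) = perm_avg k f * c"
  unfolding perm_avg_def by (simp add: sum_distrib_right)

lemma perm_avg_const: "perm_avg k (\<lambda>_. c) = c"
  unfolding perm_avg_def sum_constant card_permutations_box by (simp del: fact_Suc)

lemma perm_avg_sum: "perm_avg k (\<lambda>\<pi>. \<Sum>z\<in>A. f z \<pi>) = (\<Sum>z\<in>A. perm_avg k (f z))"
  unfolding perm_avg_def by (simp add: sum.swap[of _ A] sum_divide_distrib)

lemma perm_avg_cong: "(\<And>\<pi>. \<pi> permutes {-int k..int k} \<Longrightarrow> f \<pi> = g \<pi>) \<Longrightarrow> perm_avg k f = perm_avg k g"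
  unfolding perm_avg_def by (intro arg_cong[where f="\<lambda>x. x / _"] sum.cong) auto

lemma perm_avg_mono: "(\<And>\<pi>. \<pi> permutes {-int k..int k} \<Longrightarrow> f \<pi> \<le> g \<pi>) \<Longrightarrow> perm_avg k f \<le> perm_avg k g"
  unfolding perm_avg_def by (intro divide_right_mono sum_mono) auto

lemma abs_perm_avg_le: "(\<And>\<pi>. \<bar>f \<pi>\<bar> \<le> c) \<Longrightarrow> \<bar>perm_avg k f\<bar> \<le> c"
proof -
  assume "\<And>\<pi>. \<bar>f \<pi>\<bar> \<le> c"
  then have "perm_avg k (\<lambda>\<pi>. \<bar>f \<pi>\<bar>) \<le> c"
    using perm_avg_mono[of k "\<lambda>\<pi>. \<bar>f \<pi>\<bar>" "\<lambda>_. c"] by (simp add: perm_avg_const)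
  moreover have "\<bar>perm_avg k f\<bar> \<le> perm_avg k (\<lambda>\<pi>. \<bar>f \<pi>\<bar>)"
    unfolding perm_avg_def by (simp add: sum_abs divide_right_mono)
  ultimately show ?thesis by linarith
qed

lemma perm_avg_abs_le_sqrt: "perm_avg k (\<lambda>\<pi>. \<bar>f \<pi>\<bar>) \<le> sqrt (perm_avg k (\<lambda>\<pi>. (f \<pi>)\<^sup>2))"
proof -
  define P where "P = {\<pi>. \<pi> permutes {-int k..int k}}"
  define F :: real where "F = fact (2 * k + 1)"
  have F: "F > 0" "card P = F" unfolding F_def P_def card_permutations_box by (simp_all del: fact_Suc)
  have "(\<Sum>\<pi>\<in>P. \<bar>f \<pi>\<bar>)\<^sup>2 \<le> (\<Sum>\<pi>\<in>P. \<bar>f \<pi>\<bar>\<^sup>2) * card P"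
    by (rule sum_squared_le_sum_of_squares)
  then have "((\<Sum>\<pi>\<in>P. \<bar>f \<pi>\<bar>) / F)\<^sup>2 \<le> (\<Sum>\<pi>\<in>P. (f \<pi>)\<^sup>2) / F"
    using F by (simp add: power_divide power2_eq_square divide_le_eq)
  then have "(perm_avg k (\<lambda>\<pi>. \<bar>f \<pi>\<bar>))\<^sup>2 \<le> perm_avg k (\<lambda>\<pi>. (f \<pi>)\<^sup>2)"
    unfolding perm_avg_def P_def F_def .
  then show ?thesis by (simp add: real_le_rsqrt)
qed

lemma perm_avg_centered_product:
  "perm_avg k (\<lambda>\<pi>. (f \<pi> - c) * (g \<pi> - c))
     = (perm_avg k (\<lambda>\<pi>. f \<pi> * g \<pi>) - c\<^sup>2) - c * (perm_avg k g - c) - c * (perm_avg k f - c)"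
proof -
  have "(\<lambda>\<pi>. (f \<pi> - c) * (g \<pi> - c)) = (\<lambda>\<pi>. ((f \<pi> * g \<pi> - c * g \<pi>) - c * f \<pi>) + c\<^sup>2)"
    by (auto simp: fun_eq_iff algebra_simps power2_eq_square)
  then show ?thesis
    by (simp add: perm_avg_add perm_avg_diff perm_avg_cmult perm_avg_const algebra_simps power2_eq_square)
qed

lemma perm_avg_approx_PiE_box:
  fixes \<iota> :: "'i \<Rightarrow> int" and h :: "('i \<Rightarrow> int) \<Rightarrow> real"
  assumes "finite I" "inj_on \<iota> I" "\<iota> ` I \<subseteq> {-int k..int k}"
    and "\<And>v v'. (\<forall>i\<in>I. v i = v' i) \<Longrightarrow> h v = h v'"
    and "\<And>v. v \<in> I \<rightarrow>\<^sub>E {-int k..int k} \<Longrightarrow> \<bar>h v\<bar> \<le> M"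
  shows "\<bar>perm_avg k (\<lambda>\<pi>. h (\<pi> \<circ> \<iota>)) - (\<Sum>v\<in>I \<rightarrow>\<^sub>E {-int k..int k}. h v) / (2 * real k + 1) ^ card I\<bar>
    \<le> 2 * M * card I ^ 2 / (2 * real k + 1)"
proof -
  have box: "finite {-int k..int k}" "{-int k..int k} \<noteq> {}" by auto
  have "card {-int k..int k} = 2 * k + 1" by simp
  from average_permutations_approx_PiE[of "{-int k..int k}" I \<iota> h M, OF box assms, unfolded this]
  show ?thesis
    unfolding perm_avg_def by (simp del: fact_Suc add: add.commute)
qed

definition inner_box :: "int set \<Rightarrow> nat \<Rightarrow> int set" where
  "inner_box S k = {z\<in>{-int k..int k}. \<forall>s\<in>S. z + s \<in> {-int k..int k}}"

definition inner_box_avg :: "int set \<Rightarrow> ((int \<Rightarrow> nat) \<Rightarrow> real) \<Rightarrow> nat \<Rightarrow> (int \<Rightarrow> nat) \<Rightarrow> real" where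
  "inner_box_avg S \<phi> k \<xi> = (1 / (2 * real k + 1)) * (\<Sum>z\<in>inner_box S k. \<phi> (shift z \<xi>))"

definition support_spread :: "int set \<Rightarrow> nat" where
  "support_spread S = (\<Sum>s\<in>S. nat \<bar>s\<bar>)"

lemma inner_box_subset: "inner_box S k \<subseteq> {-int k..int k}"
  unfolding inner_box_def by auto

lemma card_box_exit_le: "card {z\<in>{-int k..int k}. z + s \<notin> {-int k..int k}} \<le> nat \<bar>s\<bar>"
proof -
  have "{z\<in>{-int k..int k}. z + s \<notin> {-int k..int k}}
      \<subseteq> (if s \<ge> 0 then {int k - s + 1..int k} else {-int k..-int k - s - 1})"
    by auto
  then have "card {z\<in>{-int k..int k}. z + s \<notin> {-int k..int k}}
      \<le> card (if s \<ge> 0 then {int k - s + 1..int k} else {-int k..-int k - s - 1})"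
    by (intro card_mono) auto
  then show ?thesis by (auto split: if_splits)
qed

lemma card_box_minus_inner_box_le:
  assumes "finite S"
  shows "card ({-int k..int k} - inner_box S k) \<le> support_spread S"
proof -
  have "{-int k..int k} - inner_box S k \<subseteq> (\<Union>s\<in>S. {z\<in>{-int k..int k}. z + s \<notin> {-int k..int k}})"
    unfolding inner_box_def by auto
  then have "card ({-int k..int k} - inner_box S k) \<le> card (\<Union>s\<in>S. {z\<in>{-int k..int k}. z + s \<notin> {-int k..int k}})"
    using assms by (intro card_mono) (auto intro: finite_subset[of _ "{-int k..int k}"])
  also have "\<dots> \<le> (\<Sum>s\<in>S. card {z\<in>{-int k..int k}. z + s \<notin> {-int k..int k}})"
    using assms by (rule card_UN_le)
  also have "\<dots> \<le> support_spread S" unfolding support_spread_def by (intro sum_mono card_box_exit_le)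
  finally show ?thesis .
qed

lemma card_inner_box_le: "real (card (inner_box S k)) \<le> 2 * real k + 1"
proof -
  have "card (inner_box S k) \<le> card {-int k..int k}" using inner_box_subset by (intro card_mono) auto
  then show ?thesis by simp
qed

lemma card_inner_box_ge:
  assumes "finite S"
  shows "2 * real k + 1 - real (support_spread S) \<le> real (card (inner_box S k))"
proof -
  have fin: "finite (inner_box S k)" using finite_subset[OF inner_box_subset] by blast
  have "card ({-int k..int k} - inner_box S k) = card {-int k..int k} - card (inner_box S k)"
    using card_Diff_subset[OF fin inner_box_subset] .
  moreover have "card (inner_box S k) \<le> card {-int k..int k}"
    using inner_box_subset by (intro card_mono) auto
  ultimately have "real (card ({-int k..int k} - inner_box S k)) = 2 * real k + 1 - real (card (inner_box S k))"
    by (simp add: of_nat_diff)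
  then show ?thesis using card_box_minus_inner_box_le[OF assms, of k] by linarith
qed

lemma card_overlapping_shifts_le:
  fixes S A :: "int set"
  assumes "finite S"
  shows "card {z'\<in>A. \<exists>s\<in>S. \<exists>s'\<in>S. z + s = z' + s'} \<le> card S ^ 2"
proof -
  have "{z'\<in>A. \<exists>s\<in>S. \<exists>s'\<in>S. z + s = z' + s'} \<subseteq> (\<lambda>(a, b). z + a - b) ` (S \<times> S)"
    by (force simp: image_iff algebra_simps)
  then have "card {z'\<in>A. \<exists>s\<in>S. \<exists>s'\<in>S. z + s = z' + s'} \<le> card ((\<lambda>(a, b). z + a - b) ` (S \<times> S))"
    using assms by (intro card_mono) auto
  also have "\<dots> \<le> card (S \<times> S)" by (rule card_image_le) (use assms in auto)
  finally show ?thesis by (simp add: card_cartesian_product power2_eq_square)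
qed

context
  fixes S :: "int set" and \<phi> :: "(int \<Rightarrow> nat) \<Rightarrow> real"
  assumes local: "local_fun S \<phi>"
begin

lemma abs_phi_tilde_emp_le:
  assumes "three_valued \<xi>"
  shows "\<bar>phi_tilde_emp S \<phi> k \<xi>\<bar> \<le> phi_norm S \<phi>"
proof -
  have "\<bar>\<Sum>v\<in>S \<rightarrow>\<^sub>E {-int k..int k}. \<phi> (\<xi> \<circ> v)\<bar> \<le> real (card (S \<rightarrow>\<^sub>E {-int k..int k})) * phi_norm S \<phi>"
    using abs_comp_le_phi_norm[OF local assms] by (intro abs_sum_le_card_mult)
  then have "(2 * real k + 1) ^ card S * \<bar>phi_tilde_emp S \<phi> k \<xi>\<bar> \<le> (2 * real k + 1) ^ card S * phi_norm S \<phi>"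
    unfolding sum_PiE_box_local_fun[OF local assms] using local_fun_finite[OF local]
    by (simp add: abs_mult card_PiE)
  then show ?thesis by simp
qed

lemma perm_avg_shift_approx:
  assumes "three_valued \<xi>" and "\<And>s. s \<in> S \<Longrightarrow> z + s \<in> {-int k..int k}"
  shows "\<bar>perm_avg k (\<lambda>\<pi>. \<phi> (shift z (\<xi> \<circ> \<pi>))) - phi_tilde_emp S \<phi> k \<xi>\<bar>
    \<le> 2 * phi_norm S \<phi> * card S ^ 2 / (2 * real k + 1)"
proof -
  have "\<phi> (shift z (\<xi> \<circ> \<pi>)) = \<phi> (\<xi> \<circ> (\<pi> \<circ> (\<lambda>s. z + s)))" for \<pi>
    unfolding shift_def by (simp add: o_def add.commute)
  moreover have "\<bar>perm_avg k (\<lambda>\<pi>. \<phi> (\<xi> \<circ> (\<pi> \<circ> (\<lambda>s. z + s))))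
      - (\<Sum>v\<in>S \<rightarrow>\<^sub>E {-int k..int k}. \<phi> (\<xi> \<circ> v)) / (2 * real k + 1) ^ card S\<bar>
      \<le> 2 * phi_norm S \<phi> * card S ^ 2 / (2 * real k + 1)"
  proof (rule perm_avg_approx_PiE_box)
    show "(\<lambda>s. z + s) ` S \<subseteq> {-int k..int k}" using assms(2) by auto
    show "\<phi> (\<xi> \<circ> v) = \<phi> (\<xi> \<circ> v')" if "\<forall>i\<in>S. v i = v' i" for v v'
      using that by (intro local_fun_cong[OF local]) simp
  qed (use local_fun_finite[OF local] abs_comp_le_phi_norm[OF local assms(1)] in \<open>auto simp: inj_on_def\<close>)
  ultimately show ?thesis unfolding sum_PiE_box_local_fun[OF local assms(1)] by simp
qed

lemma perm_avg_shift_product_approx: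
  assumes "three_valued \<xi>" "\<And>s. s \<in> S \<Longrightarrow> z + s \<in> {-int k..int k}" "\<And>s. s \<in> S \<Longrightarrow> z' + s \<in> {-int k..int k}"
    and disjoint: "\<And>s s'. s \<in> S \<Longrightarrow> s' \<in> S \<Longrightarrow> z + s \<noteq> z' + s'"
  shows "\<bar>perm_avg k (\<lambda>\<pi>. \<phi> (shift z (\<xi> \<circ> \<pi>)) * \<phi> (shift z' (\<xi> \<circ> \<pi>))) - (phi_tilde_emp S \<phi> k \<xi>)\<^sup>2\<bar>
    \<le> 2 * (phi_norm S \<phi>)\<^sup>2 * (2 * card S) ^ 2 / (2 * real k + 1)"
proof -
  define h where "h v = \<phi> (\<xi> \<circ> v \<circ> Inl) * \<phi> (\<xi> \<circ> v \<circ> Inr)" for v :: "int + int \<Rightarrow> int"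
  define \<iota> where "\<iota> = case_sum (\<lambda>s. z + s) (\<lambda>s. z' + s)"
  have S: "finite S" "card (S <+> S) = 2 * card S" using local_fun_finite[OF local] by (simp_all add: card_Plus)
  have "shift z (\<xi> \<circ> \<pi>) = \<xi> \<circ> (\<pi> \<circ> \<iota>) \<circ> Inl" "shift z' (\<xi> \<circ> \<pi>) = \<xi> \<circ> (\<pi> \<circ> \<iota>) \<circ> Inr" for \<pi>
    unfolding shift_def \<iota>_def by (auto simp: fun_eq_iff add.commute)
  then have "\<phi> (shift z (\<xi> \<circ> \<pi>)) * \<phi> (shift z' (\<xi> \<circ> \<pi>)) = h (\<pi> \<circ> \<iota>)" for \<pi>
    unfolding h_def by simp
  moreover have "\<bar>perm_avg k (\<lambda>\<pi>. h (\<pi> \<circ> \<iota>))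
      - (\<Sum>v\<in>(S <+> S) \<rightarrow>\<^sub>E {-int k..int k}. h v) / (2 * real k + 1) ^ card (S <+> S)\<bar>
      \<le> 2 * (phi_norm S \<phi>)\<^sup>2 * card (S <+> S) ^ 2 / (2 * real k + 1)"
  proof (rule perm_avg_approx_PiE_box)
    show "inj_on \<iota> (S <+> S)" unfolding \<iota>_def inj_on_def using disjoint by (auto; metis)
    show "\<iota> ` (S <+> S) \<subseteq> {-int k..int k}" using assms(2,3) unfolding \<iota>_def by auto
    show "h v = h v'" if "\<forall>i\<in>S <+> S. v i = v' i" for v v'
      unfolding h_def using that by (intro arg_cong2[where f="(*)"] local_fun_cong[OF local]) (simp_all add: Plus_def)
    show "\<bar>h v\<bar> \<le> (phi_norm S \<phi>)\<^sup>2" for v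
      unfolding h_def abs_mult power2_eq_square
      using abs_comp_le_phi_norm[OF local assms(1)] phi_norm_nonneg[OF local]
      by (intro mult_mono) (auto simp: comp_assoc)
  qed (use S in simp)
  ultimately show ?thesis
    unfolding h_def sum_PiE_box_local_fun_product[OF local assms(1)] S(2) by simp
qed

lemma perm_avg_covariance_le:
  assumes "three_valued \<xi>" "z \<in> inner_box S k" "z' \<in> inner_box S k"
  defines "G \<equiv> phi_tilde_emp S \<phi> k \<xi>" and "M \<equiv> phi_norm S \<phi>"
  shows "perm_avg k (\<lambda>\<pi>. (\<phi> (shift z (\<xi> \<circ> \<pi>)) - G) * (\<phi> (shift z' (\<xi> \<circ> \<pi>)) - G))
     \<le> 12 * M\<^sup>2 * card S ^ 2 / (2 * real k + 1) + (if \<exists>s\<in>S. \<exists>s'\<in>S. z + s = z' + s' then 4 * M\<^sup>2 else 0)"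
proof -
  define Y where "Y z \<pi> = \<phi> (shift z (\<xi> \<circ> \<pi>))" for z \<pi>
  have M: "M \<ge> 0" unfolding M_def by (rule phi_norm_nonneg[OF local])
  have Y: "\<bar>Y z \<pi>\<bar> \<le> M" for z \<pi>
    unfolding Y_def M_def shift_def using abs_comp_le_phi_norm[OF local assms(1)] by (simp add: comp_def)
  have G: "\<bar>G\<bar> \<le> M" unfolding G_def M_def by (rule abs_phi_tilde_emp_le[OF assms(1)])
  have inside: "\<And>s. s \<in> S \<Longrightarrow> z + s \<in> {-int k..int k}" "\<And>s. s \<in> S \<Longrightarrow> z' + s \<in> {-int k..int k}"
    using assms(2,3) unfolding inner_box_def by auto
  show ?thesis
  proof (cases "\<exists>s\<in>S. \<exists>s'\<in>S. z + s = z' + s'")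
    case True
    have "\<bar>(Y z \<pi> - G) * (Y z' \<pi> - G)\<bar> \<le> (2 * M) * (2 * M)" for \<pi>
      unfolding abs_mult using Y[of z \<pi>] Y[of z' \<pi>] G M by (intro mult_mono) auto
    then have "\<bar>perm_avg k (\<lambda>\<pi>. (Y z \<pi> - G) * (Y z' \<pi> - G))\<bar> \<le> 4 * M\<^sup>2"
      by (intro abs_perm_avg_le) (simp add: power2_eq_square)
    moreover have "0 \<le> 12 * M\<^sup>2 * card S ^ 2 / (2 * real k + 1)" by simp
    ultimately show ?thesis using True unfolding Y_def by (simp add: abs_le_iff del: divide_nonneg_nonneg)
  next
    case False
    have d2: "\<bar>perm_avg k (\<lambda>\<pi>. Y z \<pi> * Y z' \<pi>) - G\<^sup>2\<bar> \<le> 2 * M\<^sup>2 * (2 * card S) ^ 2 / (2 * real k + 1)"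
      using perm_avg_shift_product_approx[OF assms(1) inside] False unfolding Y_def G_def M_def by blast
    have d1: "\<bar>perm_avg k (Y w) - G\<bar> \<le> 2 * M * card S ^ 2 / (2 * real k + 1)"
      if "\<And>s. s \<in> S \<Longrightarrow> w + s \<in> {-int k..int k}" for w
      using perm_avg_shift_approx[OF assms(1) that] unfolding Y_def G_def M_def .
    have "\<bar>perm_avg k (\<lambda>\<pi>. (Y z \<pi> - G) * (Y z' \<pi> - G))\<bar>
        \<le> \<bar>perm_avg k (\<lambda>\<pi>. Y z \<pi> * Y z' \<pi>) - G\<^sup>2\<bar> + \<bar>G\<bar> * \<bar>perm_avg k (Y z') - G\<bar>
          + \<bar>G\<bar> * \<bar>perm_avg k (Y z) - G\<bar>"
      unfolding perm_avg_centered_product by (simp add: abs_mult[symmetric])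
    also have "\<dots> \<le> 2 * M\<^sup>2 * (2 * card S) ^ 2 / (2 * real k + 1)
          + M * (2 * M * card S ^ 2 / (2 * real k + 1)) + M * (2 * M * card S ^ 2 / (2 * real k + 1))"
      using d2 d1[OF inside(1)] d1[OF inside(2)] G M by (intro add_mono mult_mono) auto
    finally have "\<bar>perm_avg k (\<lambda>\<pi>. (Y z \<pi> - G) * (Y z' \<pi> - G))\<bar>
        \<le> 2 * M\<^sup>2 * (2 * card S) ^ 2 / (2 * real k + 1)
          + M * (2 * M * card S ^ 2 / (2 * real k + 1)) + M * (2 * M * card S ^ 2 / (2 * real k + 1))" .
    then show ?thesis using False unfolding Y_def
      by (simp add: algebra_simps power2_eq_square add_divide_distrib[symmetric])
  qed
qed

lemma sum_perm_avg_covariance_le: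
  fixes k :: nat
  assumes "three_valued \<xi>"
  defines "G \<equiv> phi_tilde_emp S \<phi> k \<xi>" and "M \<equiv> phi_norm S \<phi>"
  shows "(\<Sum>z\<in>inner_box S k. \<Sum>z'\<in>inner_box S k.
      perm_avg k (\<lambda>\<pi>. (\<phi> (shift z (\<xi> \<circ> \<pi>)) - G) * (\<phi> (shift z' (\<xi> \<circ> \<pi>)) - G)))
    \<le> (2 * real k + 1) * (16 * M\<^sup>2 * card S ^ 2)"
proof -
  define m where "m = 2 * real k + 1"
  define A where "A = 12 * M\<^sup>2 * card S ^ 2 / m"
  define overlap where "overlap z = {z'\<in>inner_box S k. \<exists>s\<in>S. \<exists>s'\<in>S. z + s = z' + s'}" for z
  have m: "m > 0" unfolding m_def by simp
  have A: "A \<ge> 0" unfolding A_def using m by simp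
  have fin: "finite (inner_box S k)" using finite_subset[OF inner_box_subset] by blast
  have box: "real (card (inner_box S k)) \<le> m" unfolding m_def by (rule card_inner_box_le)
  have overlap: "real (card (overlap z)) \<le> card S ^ 2" for z
    unfolding overlap_def using card_overlapping_shifts_le[OF local_fun_finite[OF local]] of_nat_mono
    by fastforce
  have "(\<Sum>z\<in>inner_box S k. \<Sum>z'\<in>inner_box S k.
      perm_avg k (\<lambda>\<pi>. (\<phi> (shift z (\<xi> \<circ> \<pi>)) - G) * (\<phi> (shift z' (\<xi> \<circ> \<pi>)) - G)))
      \<le> (\<Sum>z\<in>inner_box S k. \<Sum>z'\<in>inner_box S k. A + (if z' \<in> overlap z then 4 * M\<^sup>2 else 0))"
    using perm_avg_covariance_le[OF assms(1)] unfolding A_def G_def M_def m_def overlap_def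
    by (intro sum_mono) auto
  also have "\<dots> = (\<Sum>z\<in>inner_box S k. card (inner_box S k) * A + card (overlap z) * (4 * M\<^sup>2))"
    using fin by (simp add: sum.distrib sum.If_cases overlap_def Int_def)
  also have "\<dots> \<le> (\<Sum>z\<in>inner_box S k. m * A + card S ^ 2 * (4 * M\<^sup>2))"
    using box overlap A by (intro sum_mono add_mono mult_right_mono) auto
  also have "\<dots> \<le> m * (m * A + card S ^ 2 * (4 * M\<^sup>2))"
    using box A by (simp add: mult_right_mono)
  also have "\<dots> = m * (16 * M\<^sup>2 * card S ^ 2)" unfolding A_def using m by (simp add: field_simps)
  finally show ?thesis unfolding m_def .
qed

text \<open>Only \<open>O(k)\<close> of the \<open>O(k\<^sup>2)\<close> pairs of translates overlap; the others are nearly uncorrelated.\<close>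

lemma perm_avg_variance_le:
  assumes "three_valued \<xi>"
  shows "perm_avg k (\<lambda>\<pi>. (inner_box_avg S \<phi> k (\<xi> \<circ> \<pi>) - phi_tilde_emp S \<phi> k \<xi>)\<^sup>2)
    \<le> (32 * real (card S) ^ 2 + 2 * real (support_spread S) ^ 2) * (phi_norm S \<phi>)\<^sup>2 / (2 * real k + 1)"
proof -
  define M where "M = phi_norm S \<phi>"
  define G where "G = phi_tilde_emp S \<phi> k \<xi>"
  define m where "m = 2 * real k + 1"
  define b where "b = real (card (inner_box S k))"
  define R where "R = real (support_spread S)"
  define e where "e z \<pi> = \<phi> (shift z (\<xi> \<circ> \<pi>)) - G" for z \<pi>
  define X where "X \<pi> = (1 / m) * (\<Sum>z\<in>inner_box S k. e z \<pi>)" for \<pi>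
  define c where "c = (1 - b / m) * G"
  have m: "m \<ge> 1" unfolding m_def by simp
  have b: "b \<le> m" "m - b \<le> R"
    unfolding b_def m_def R_def using card_inner_box_le card_inner_box_ge[OF local_fun_finite[OF local]]
    by (auto simp: algebra_simps)
  have centred: "inner_box_avg S \<phi> k (\<xi> \<circ> \<pi>) - G = X \<pi> - c" for \<pi>
    using m unfolding inner_box_avg_def X_def e_def c_def b_def m_def[symmetric]
    by (simp add: sum_subtractf field_simps)
  have Xsq: "(X \<pi>)\<^sup>2 = (1 / m\<^sup>2) * (\<Sum>z\<in>inner_box S k. \<Sum>z'\<in>inner_box S k. e z \<pi> * e z' \<pi>)" for \<pi>
    unfolding X_def by (simp add: power2_eq_square sum_product)
  have "perm_avg k (\<lambda>\<pi>. (X \<pi>)\<^sup>2)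
      = (1 / m\<^sup>2) * (\<Sum>z\<in>inner_box S k. \<Sum>z'\<in>inner_box S k. perm_avg k (\<lambda>\<pi>. e z \<pi> * e z' \<pi>))"
    unfolding Xsq perm_avg_cmult perm_avg_sum ..
  also have "\<dots> \<le> (1 / m\<^sup>2) * (m * (16 * M\<^sup>2 * card S ^ 2))"
    using sum_perm_avg_covariance_le[OF assms] unfolding e_def G_def M_def m_def by (intro mult_left_mono) auto
  finally have X: "perm_avg k (\<lambda>\<pi>. (X \<pi>)\<^sup>2) \<le> 16 * M\<^sup>2 * card S ^ 2 / m"
    using m by (simp add: power2_eq_square)
  have "1 - b / m = (m - b) / m" using m by (simp add: field_simps)
  then have "\<bar>1 - b / m\<bar> \<le> R / m" using b m by (simp add: divide_right_mono)
  then have "\<bar>c\<bar> \<le> R / m * M"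
    unfolding c_def abs_mult using abs_phi_tilde_emp_le[OF assms] unfolding G_def M_def
    by (intro mult_mono) auto
  then have "c\<^sup>2 \<le> R\<^sup>2 * M\<^sup>2 / m\<^sup>2"
    by (metis abs_ge_zero order.trans power2_abs power_mono power_divide power_mult_distrib times_divide_eq_left)
  also have "\<dots> \<le> R\<^sup>2 * M\<^sup>2 / m"
    using m by (intro divide_left_mono) (auto simp: power2_eq_square)
  finally have c: "c\<^sup>2 \<le> R\<^sup>2 * M\<^sup>2 / m" .
  have "perm_avg k (\<lambda>\<pi>. (inner_box_avg S \<phi> k (\<xi> \<circ> \<pi>) - G)\<^sup>2) \<le> perm_avg k (\<lambda>\<pi>. 2 * (X \<pi>)\<^sup>2 + 2 * c\<^sup>2)"
    unfolding centred by (intro perm_avg_mono) (use power2_add_le[of _ "- c"] in simp)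
  also have "\<dots> \<le> 2 * (16 * M\<^sup>2 * card S ^ 2 / m) + 2 * (R\<^sup>2 * M\<^sup>2 / m)"
    unfolding perm_avg_add perm_avg_cmult perm_avg_const using X c by simp
  also have "\<dots> = (32 * real (card S) ^ 2 + 2 * R ^ 2) * M\<^sup>2 / m"
    by (simp add: algebra_simps add_divide_distrib)
  finally show ?thesis unfolding G_def M_def m_def R_def .
qed

end


section \<open>Box permutations acting on the torus\<close>

text \<open>For \<open>2k + 1 \<le> N\<close> the box \<open>{-k..k}\<close> embeds into \<open>\<int>/N\<int>\<close>, and a permutation of the box acts
  on the torus through this embedding.\<close>

definition torus_mod :: "nat \<Rightarrow> int \<Rightarrow> int" where
  "torus_mod N z = z mod int N"

definition lift_perm :: "nat \<Rightarrow> nat \<Rightarrow> (int \<Rightarrow> int) \<Rightarrow> (int \<Rightarrow> int)" where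
  "lift_perm N k \<pi> = (\<lambda>x. if x \<in> torus_mod N ` {-int k..int k}
      then torus_mod N (\<pi> (inv_into {-int k..int k} (torus_mod N) x)) else x)"

lemma inj_on_torus_mod_box:
  assumes "2 * k + 1 \<le> N"
  shows "inj_on (torus_mod N) {-int k..int k}"
proof (rule inj_onI)
  fix z z' assume z: "z \<in> {-int k..int k}" "z' \<in> {-int k..int k}" and "torus_mod N z = torus_mod N z'"
  then have dvd: "int N dvd z - z'" unfolding torus_mod_def by (simp add: mod_eq_dvd_iff)
  have less: "\<bar>z - z'\<bar> < int N" using z assms by auto
  show "z = z'"
  proof (rule ccontr)
    assume "z \<noteq> z'"
    then have "\<bar>int N\<bar> \<le> \<bar>z - z'\<bar>" using dvd by (intro dvd_imp_le_int) auto
    then show False using less by simp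
  qed
qed

lemma lift_perm_permutes_image:
  assumes "2 * k + 1 \<le> N" "\<pi> permutes {-int k..int k}"
  shows "lift_perm N k \<pi> permutes (torus_mod N ` {-int k..int k})"
proof -
  define B where "B = {-int k..int k}"
  have "bij_betw (torus_mod N) B (torus_mod N ` B)"
    unfolding B_def using inj_on_torus_mod_box[OF assms(1)] by (simp add: bij_betw_def)
  moreover have "bij_betw \<pi> B B" using assms(2) unfolding B_def by (rule permutes_imp_bij)
  ultimately have "bij_betw (torus_mod N \<circ> \<pi> \<circ> inv_into B (torus_mod N)) (torus_mod N ` B) (torus_mod N ` B)"
    by (metis bij_betw_inv_into bij_betw_trans comp_assoc)
  then have "bij_betw (lift_perm N k \<pi>) (torus_mod N ` B) (torus_mod N ` B)"
    unfolding lift_perm_def B_def[symmetric] by (rule bij_betw_cong[THEN iffD1, rotated]) auto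
  then show ?thesis unfolding B_def by (rule bij_imp_permutes) (auto simp: lift_perm_def)
qed

lemma lift_perm_permutes:
  assumes "2 * k + 1 \<le> N" "\<pi> permutes {-int k..int k}"
  shows "lift_perm N k \<pi> permutes {0..<int N}"
  by (rule permutes_subset[OF lift_perm_permutes_image[OF assms]]) (use assms(1) in \<open>auto simp: torus_mod_def\<close>)

lemma per_comp_lift_perm:
  assumes "2 * k + 1 \<le> N" "z \<in> {-int k..int k}"
  shows "per N (\<eta> \<circ> lift_perm N k \<pi>) z = per N \<eta> (\<pi> z)"
proof -
  have "inv_into {-int k..int k} (torus_mod N) (torus_mod N z) = z"
    using inv_into_f_f[OF inj_on_torus_mod_box[OF assms(1)] assms(2)] .
  then show ?thesis unfolding per_def lift_perm_def using assms(2) by (simp add: torus_mod_def)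
qed

lemma perm_cost_transpose_box_le:
  assumes "2 * k + 1 \<le> N" "y \<in> {-int k..int k}" "y' \<in> {-int k..int k}" "\<beta> \<ge> 0"
    and bonds: "\<And>x. x \<in> {0..<int N} \<Longrightarrow> perm_cost N f (bond N x) \<le> \<beta>"
  shows "perm_cost N f (Transposition.transpose (y mod int N) (y' mod int N)) \<le> 4 * real k * \<beta>"
proof -
  have ordered: "perm_cost N f (Transposition.transpose (y mod int N) (y' mod int N)) \<le> 4 * real k * \<beta>"
    if "y \<in> {-int k..int k}" "y' \<in> {-int k..int k}" "y < y'" for y y'
  proof -
    define d where "d = nat (y' - y)"
    have d: "1 \<le> d" "d < N" "real d \<le> 2 * real k" "y' = y + int d"
      using that assms(1) unfolding d_def by auto
    then have "perm_cost N f (Transposition.transpose (y mod int N) (y' mod int N)) \<le> (2 * real d - 1) * \<beta>"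
      using perm_cost_transpose_dist_le[OF bonds d(1,2)] by simp
    also have "\<dots> \<le> 4 * real k * \<beta>" using d assms(4) by (intro mult_right_mono) auto
    finally show ?thesis .
  qed
  show ?thesis
    using ordered[OF assms(2,3)] ordered[OF assms(3,2)] perm_cost_id[of N f] assms(4)
    by (cases y y' rule: linorder_cases) (simp_all add: transpose_commute)
qed

lemma perm_cost_lift_perm_le:
  assumes "2 * k + 1 \<le> N" "\<pi> permutes {-int k..int k}" "\<beta> \<ge> 0"
    and bonds: "\<And>x. x \<in> {0..<int N} \<Longrightarrow> perm_cost N f (bond N x) \<le> \<beta>"
  shows "perm_cost N f (lift_perm N k \<pi>) \<le> (2 * real k + 1) * (4 * real k * \<beta>)"
proof -
  have "card (torus_mod N ` {-int k..int k}) = 2 * k + 1"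
    using card_image[OF inj_on_torus_mod_box[OF assms(1)]] by simp
  moreover have "perm_cost N f (lift_perm N k \<pi>) \<le> real (card (torus_mod N ` {-int k..int k})) * (4 * real k * \<beta>)"
  proof (rule perm_cost_permutes_le)
    show "torus_mod N ` {-int k..int k} \<subseteq> {0..<int N}" using assms(1) by (auto simp: torus_mod_def)
    show "perm_cost N f (Transposition.transpose a b) \<le> 4 * real k * \<beta>"
      if "a \<in> torus_mod N ` {-int k..int k}" "b \<in> torus_mod N ` {-int k..int k}" for a b
      using that perm_cost_transpose_box_le[OF assms(1) _ _ assms(3) bonds] by (auto simp: torus_mod_def)
  qed (use lift_perm_permutes_image[OF assms(1,2)] in simp_all)
  ultimately show ?thesis by (simp add: add.commute)
qed


section \<open>The one-block estimate\<close>

lemma three_valued_per: "N > 0 \<Longrightarrow> \<eta> \<in> Omega N \<Longrightarrow> three_valued (per N \<eta>)"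
  unfolding three_valued_def per_def Omega_def by auto

lemma emp_density_cong:
  "(\<And>x. x \<in> {-int k..int k} \<Longrightarrow> \<xi> x = \<xi>' x) \<Longrightarrow> emp_density k \<xi> a = emp_density k \<xi>' a"
  unfolding emp_density_def by (intro arg_cong[where f="\<lambda>x. _ * x"] sum.cong) auto

lemma phi_tilde_emp_cong:
  "(\<And>x. x \<in> {-int k..int k} \<Longrightarrow> \<xi> x = \<xi>' x) \<Longrightarrow> phi_tilde_emp S \<phi> k \<xi> = phi_tilde_emp S \<phi> k \<xi>'"
  unfolding phi_tilde_emp_def using emp_density_cong by metis

lemma emp_density_comp_permutes:
  "\<pi> permutes {-int k..int k} \<Longrightarrow> emp_density k (\<xi> \<circ> \<pi>) a = emp_density k \<xi> a"
  unfolding emp_density_def using sum.permute[of \<pi> "{-int k..int k}" "\<lambda>z. if \<xi> z = a then 1 else (0::real)"]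
  by (simp add: o_def)

lemma phi_tilde_emp_comp_permutes:
  "\<pi> permutes {-int k..int k} \<Longrightarrow> phi_tilde_emp S \<phi> k (\<xi> \<circ> \<pi>) = phi_tilde_emp S \<phi> k \<xi>"
  unfolding phi_tilde_emp_def by (simp add: emp_density_comp_permutes)

lemma phi_tilde_box_density:
  "phi_tilde S \<phi> (box_density N k 1 \<eta>) (box_density N k 2 \<eta>) = phi_tilde_emp S \<phi> k (per N \<eta>)"
  unfolding phi_tilde_emp_def box_density_def emp_density_def ..

definition block_error :: "int set \<Rightarrow> ((int \<Rightarrow> nat) \<Rightarrow> real) \<Rightarrow> nat \<Rightarrow> (int \<Rightarrow> nat) \<Rightarrow> real" where
  "block_error S \<phi> k \<xi> = \<bar>inner_box_avg S \<phi> k \<xi> - phi_tilde_emp S \<phi> k \<xi>\<bar>"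

lemma sum_density_le_perm_avg_lift_perm:
  assumes "2 * k + 1 \<le> N" "H \<ge> 0"
    and bounded: "\<And>\<eta>. \<eta> \<in> Omega N \<Longrightarrow> \<bar>h \<eta>\<bar> \<le> H"
    and cost: "\<And>\<pi>. \<pi> permutes {-int k..int k} \<Longrightarrow> perm_cost N f (lift_perm N k \<pi>) \<le> C"
  shows "(\<Sum>\<eta>\<in>Omega N. h \<eta> * f \<eta> * (1/3)^N)
    \<le> (\<Sum>\<eta>\<in>Omega N. perm_avg k (\<lambda>\<pi>. h (\<eta> \<circ> lift_perm N k \<pi>)) * f \<eta> * (1/3)^N) + H * C"
proof -
  have "(\<Sum>\<eta>\<in>Omega N. h \<eta> * f \<eta> * (1/3)^N)
      \<le> (\<Sum>\<eta>\<in>Omega N. h (\<eta> \<circ> lift_perm N k \<pi>) * f \<eta> * (1/3)^N) + H * C"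
    if \<pi>: "\<pi> permutes {-int k..int k}" for \<pi>
    using sum_comp_permutes_diff_le_perm_cost[where f=f and h=h and H=H, OF lift_perm_permutes[OF assms(1) \<pi>] bounded]
      mult_left_mono[OF cost[OF \<pi>] assms(2)]
    by (simp add: abs_le_iff)
  then have "perm_avg k (\<lambda>_. \<Sum>\<eta>\<in>Omega N. h \<eta> * f \<eta> * (1/3)^N)
      \<le> perm_avg k (\<lambda>\<pi>. (\<Sum>\<eta>\<in>Omega N. h (\<eta> \<circ> lift_perm N k \<pi>) * f \<eta> * (1/3)^N) + H * C)"
    by (rule perm_avg_mono)
  then show ?thesis
    by (simp add: perm_avg_const perm_avg_add perm_avg_sum perm_avg_mult_right)
qed

context
  fixes S :: "int set" and \<phi> :: "(int \<Rightarrow> nat) \<Rightarrow> real"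
  assumes local: "local_fun S \<phi>"
begin

lemma inner_box_avg_cong:
  assumes "\<And>x. x \<in> {-int k..int k} \<Longrightarrow> \<xi> x = \<xi>' x"
  shows "inner_box_avg S \<phi> k \<xi> = inner_box_avg S \<phi> k \<xi>'"
  unfolding inner_box_avg_def
proof (intro arg_cong[where f="\<lambda>x. _ * x"] sum.cong refl local_fun_cong[OF local])
  fix z s assume "z \<in> inner_box S k" "s \<in> S"
  then have "s + z \<in> {-int k..int k}" unfolding inner_box_def by (auto simp: add.commute)
  then show "shift z \<xi> s = shift z \<xi>' s" unfolding shift_def using assms by simp
qed

lemma abs_block_error_le:
  assumes "three_valued \<xi>"
  shows "block_error S \<phi> k \<xi> \<le> 2 * phi_norm S \<phi>"
proof -
  have "\<bar>\<Sum>z\<in>inner_box S k. \<phi> (shift z \<xi>)\<bar> \<le> real (card (inner_box S k)) * phi_norm S \<phi>"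
    using abs_comp_le_phi_norm[OF local assms] unfolding shift_def comp_def
    by (intro abs_sum_le_card_mult) simp
  also have "\<dots> \<le> (2 * real k + 1) * phi_norm S \<phi>"
    using card_inner_box_le phi_norm_nonneg[OF local] by (intro mult_right_mono) auto
  finally have "\<bar>inner_box_avg S \<phi> k \<xi>\<bar> \<le> phi_norm S \<phi>"
    unfolding inner_box_avg_def by (simp add: abs_mult field_simps)
  then show ?thesis unfolding block_error_def using abs_phi_tilde_emp_le[OF local assms, of k] by linarith
qed

lemma box_avg_error_le_block_error:
  assumes "N > 0" "\<eta> \<in> Omega N"
  shows "\<bar>box_avg N k \<phi> \<eta> - phi_tilde S \<phi> (box_density N k 1 \<eta>) (box_density N k 2 \<eta>)\<bar>
    \<le> block_error S \<phi> k (per N \<eta>) + phi_norm S \<phi> * real (support_spread S) / (2 * real k + 1)"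
proof -
  define outside where "outside = {-int k..int k} - inner_box S k"
  have "(\<Sum>z\<in>{-int k..int k}. \<phi> (shift z (per N \<eta>)))
      = (\<Sum>z\<in>inner_box S k. \<phi> (shift z (per N \<eta>))) + (\<Sum>z\<in>outside. \<phi> (shift z (per N \<eta>)))"
    unfolding outside_def using sum.subset_diff[OF inner_box_subset[of S k]] by (simp add: add.commute)
  then have split: "box_avg N k \<phi> \<eta> = inner_box_avg S \<phi> k (per N \<eta>)
      + (\<Sum>z\<in>outside. \<phi> (shift z (per N \<eta>))) / (2 * real k + 1)"
    unfolding box_avg_def inner_box_avg_def by (simp add: algebra_simps)
  have "\<bar>\<Sum>z\<in>outside. \<phi> (shift z (per N \<eta>))\<bar> \<le> real (card outside) * phi_norm S \<phi>"
    using abs_comp_le_phi_norm[OF local three_valued_per[OF assms]] unfolding shift_def comp_def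
    by (intro abs_sum_le_card_mult) simp
  also have "\<dots> \<le> real (support_spread S) * phi_norm S \<phi>"
    unfolding outside_def using card_box_minus_inner_box_le[OF local_fun_finite[OF local], of k]
      phi_norm_nonneg[OF local] by (intro mult_right_mono) auto
  finally have "\<bar>(\<Sum>z\<in>outside. \<phi> (shift z (per N \<eta>))) / (2 * real k + 1)\<bar>
      \<le> phi_norm S \<phi> * real (support_spread S) / (2 * real k + 1)"
    by (simp add: divide_right_mono mult.commute)
  then show ?thesis unfolding split phi_tilde_box_density block_error_def by linarith
qed

text \<open>A lifted box permutation only rearranges the box, so it leaves the empirical densities
  unchanged and moves the block average; the variance bound then controls the error.\<close>

lemma perm_avg_block_error_lift_perm_le:
  assumes "2 * k + 1 \<le> N" "\<eta> \<in> Omega N"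
  shows "perm_avg k (\<lambda>\<pi>. block_error S \<phi> k (per N (\<eta> \<circ> lift_perm N k \<pi>)))
    \<le> sqrt ((32 * real (card S) ^ 2 + 2 * real (support_spread S) ^ 2) * (phi_norm S \<phi>)\<^sup>2 / (2 * real k + 1))"
proof -
  have "perm_avg k (\<lambda>\<pi>. block_error S \<phi> k (per N (\<eta> \<circ> lift_perm N k \<pi>)))
      = perm_avg k (\<lambda>\<pi>. \<bar>inner_box_avg S \<phi> k (per N \<eta> \<circ> \<pi>) - phi_tilde_emp S \<phi> k (per N \<eta>)\<bar>)"
  proof (rule perm_avg_cong)
    fix \<pi> assume \<pi>: "\<pi> permutes {-int k..int k}"
    have same: "per N (\<eta> \<circ> lift_perm N k \<pi>) x = (per N \<eta> \<circ> \<pi>) x" if "x \<in> {-int k..int k}" for x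
      using per_comp_lift_perm[OF assms(1) that] by simp
    have "inner_box_avg S \<phi> k (per N (\<eta> \<circ> lift_perm N k \<pi>)) = inner_box_avg S \<phi> k (per N \<eta> \<circ> \<pi>)"
      using same by (rule inner_box_avg_cong)
    moreover have "phi_tilde_emp S \<phi> k (per N (\<eta> \<circ> lift_perm N k \<pi>)) = phi_tilde_emp S \<phi> k (per N \<eta> \<circ> \<pi>)"
      using same by (rule phi_tilde_emp_cong)
    moreover have "phi_tilde_emp S \<phi> k (per N \<eta> \<circ> \<pi>) = phi_tilde_emp S \<phi> k (per N \<eta>)"
      by (rule phi_tilde_emp_comp_permutes[OF \<pi>])
    ultimately show "block_error S \<phi> k (per N (\<eta> \<circ> lift_perm N k \<pi>))
        = \<bar>inner_box_avg S \<phi> k (per N \<eta> \<circ> \<pi>) - phi_tilde_emp S \<phi> k (per N \<eta>)\<bar>"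
      unfolding block_error_def by simp
  qed
  also have "\<dots> \<le> sqrt (perm_avg k (\<lambda>\<pi>. (inner_box_avg S \<phi> k (per N \<eta> \<circ> \<pi>) - phi_tilde_emp S \<phi> k (per N \<eta>))\<^sup>2))"
    by (rule perm_avg_abs_le_sqrt)
  also have "\<dots> \<le> sqrt ((32 * real (card S) ^ 2 + 2 * real (support_spread S) ^ 2) * (phi_norm S \<phi>)\<^sup>2 / (2 * real k + 1))"
    using assms by (intro real_sqrt_le_mono perm_avg_variance_le[OF local] three_valued_per) auto
  finally show ?thesis .
qed

lemma expectation_box_error_le:
  assumes "2 * k + 1 \<le> N" "is_density N f" "Dirichlet N f \<le> c / real N"
  shows "(\<Sum>\<eta>\<in>Omega N. \<bar>box_avg N k \<phi> \<eta> - phi_tilde S \<phi> (box_density N k 1 \<eta>) (box_density N k 2 \<eta>)\<bar>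
      * f \<eta> * (1/3)^N)
    \<le> phi_norm S \<phi> * real (support_spread S) / (2 * real k + 1)
      + sqrt ((32 * real (card S) ^ 2 + 2 * real (support_spread S) ^ 2) * (phi_norm S \<phi>)\<^sup>2 / (2 * real k + 1))
      + 2 * phi_norm S \<phi> * ((2 * real k + 1) * (4 * real k * (2 * sqrt (2 * (c / real N)))))"
    (is "?E \<le> ?boundary + ?variance + 2 * ?M * ?transport")
proof -
  define w :: real where "w = (1/3)^N"
  have N: "N > 0" using assms(1) by simp
  have f: "\<And>\<eta>. \<eta> \<in> Omega N \<Longrightarrow> 0 \<le> f \<eta> * w" and mass: "(\<Sum>\<eta>\<in>Omega N. f \<eta> * w) = 1"
    using assms(2) unfolding is_density_def w_def by auto
  have M: "?M \<ge> 0" by (rule phi_norm_nonneg[OF local])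
  have \<beta>: "0 \<le> 2 * sqrt (2 * Dirichlet N f)" "2 * sqrt (2 * Dirichlet N f) \<le> 2 * sqrt (2 * (c / real N))"
    using Dirichlet_nonneg[of N f] assms(3) by auto
  have cost: "perm_cost N f (lift_perm N k \<pi>) \<le> ?transport" if "\<pi> permutes {-int k..int k}" for \<pi>
    using perm_cost_lift_perm_le[OF assms(1) that \<beta>(1) perm_cost_bond_le[OF assms(2)]] \<beta>(2)
    by (smt (verit, best) mult_left_mono of_nat_0_le_iff mult_nonneg_nonneg)
  have "?E \<le> (\<Sum>\<eta>\<in>Omega N. (block_error S \<phi> k (per N \<eta>) + ?boundary) * (f \<eta> * w))"
    unfolding w_def mult.assoc using box_avg_error_le_block_error[OF N] f[unfolded w_def]
    by (intro sum_mono mult_right_mono) auto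
  also have "\<dots> = (\<Sum>\<eta>\<in>Omega N. block_error S \<phi> k (per N \<eta>) * f \<eta> * w) + ?boundary * (\<Sum>\<eta>\<in>Omega N. f \<eta> * w)"
    by (simp add: distrib_right sum.distrib sum_distrib_left mult.assoc)
  also have "\<dots> = (\<Sum>\<eta>\<in>Omega N. block_error S \<phi> k (per N \<eta>) * f \<eta> * w) + ?boundary"
    unfolding mass by simp
  also have "(\<Sum>\<eta>\<in>Omega N. block_error S \<phi> k (per N \<eta>) * f \<eta> * w)
      \<le> (\<Sum>\<eta>\<in>Omega N. perm_avg k (\<lambda>\<pi>. block_error S \<phi> k (per N (\<eta> \<circ> lift_perm N k \<pi>))) * f \<eta> * w)
        + 2 * ?M * ?transport"
    unfolding w_def using M cost abs_block_error_le[OF three_valued_per[OF N]]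
    by (intro sum_density_le_perm_avg_lift_perm[OF assms(1)]) (auto simp: block_error_def)
  also have "(\<Sum>\<eta>\<in>Omega N. perm_avg k (\<lambda>\<pi>. block_error S \<phi> k (per N (\<eta> \<circ> lift_perm N k \<pi>))) * f \<eta> * w)
      \<le> (\<Sum>\<eta>\<in>Omega N. ?variance * (f \<eta> * w))"
    unfolding mult.assoc using f perm_avg_block_error_lift_perm_le[OF assms(1)]
    by (intro sum_mono mult_right_mono) auto
  also have "\<dots> = ?variance" using mass by (simp add: sum_distrib_left[symmetric])
  finally show ?thesis by linarith
qed

end


section \<open>Passing to the limit\<close>

lemma limsup_limsup_eq_0:
  fixes a :: "nat \<Rightarrow> nat \<Rightarrow> ereal" and b :: "nat \<Rightarrow> real" and r :: "nat \<Rightarrow> nat \<Rightarrow> real"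
  assumes nonneg: "\<And>k N. 0 \<le> a k N"
    and bounded: "\<And>k. eventually (\<lambda>N. a k N \<le> ereal (b k + r k N)) sequentially"
    and "\<And>k. r k \<longlonglongrightarrow> 0" and "b \<longlonglongrightarrow> 0"
  shows "limsup (\<lambda>k. limsup (a k)) = 0"
proof -
  have limsup_nonneg: "0 \<le> limsup x" if "\<And>n. 0 \<le> x n" for x :: "nat \<Rightarrow> ereal"
  proof -
    have "limsup (\<lambda>_. 0 :: ereal) \<le> limsup x" by (rule Limsup_mono) (simp add: that)
    then show ?thesis by (simp add: Limsup_const)
  qed
  have inner: "limsup (a k) \<le> ereal (b k)" for k
  proof -
    have "(\<lambda>N. ereal (b k + r k N)) \<longlonglongrightarrow> ereal (b k + 0)"
      unfolding lim_ereal by (intro tendsto_add tendsto_const assms(3))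
    then have "limsup (\<lambda>N. ereal (b k + r k N)) = ereal (b k)"
      by (simp add: lim_imp_Limsup)
    moreover have "limsup (a k) \<le> limsup (\<lambda>N. ereal (b k + r k N))"
      by (rule Limsup_mono[OF bounded])
    ultimately show ?thesis by simp
  qed
  have "limsup (\<lambda>k. limsup (a k)) \<le> limsup (\<lambda>k. ereal (b k))"
    using inner by (intro Limsup_mono) simp
  also have "\<dots> = 0"
    using assms(4) by (simp add: lim_imp_Limsup tendsto_ereal zero_ereal_def)
  finally have "limsup (\<lambda>k. limsup (a k)) \<le> 0" .
  moreover have "0 \<le> limsup (\<lambda>k. limsup (a k))"
    by (intro limsup_nonneg) (simp add: nonneg)
  ultimately show ?thesis by simp
qed

lemma Dirichlet_const: "Dirichlet N (\<lambda>_. a) = 0"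
  unfolding Dirichlet_def by simp

lemma is_density_uniform: "is_density N (\<lambda>_. 1 / (real (card (Omega N)) * (1/3)^N))"
proof -
  have "(\<lambda>_. 0) \<in> Omega N" unfolding Omega_def by simp
  then have "card (Omega N) > 0" using finite_Omega by (auto simp: card_gt_0_iff)
  then show ?thesis unfolding is_density_def by simp
qed

lemma SUP_expectation_nonneg:
  assumes "c \<ge> 0"
  shows "0 \<le> (SUP f\<in>{f. is_density N f \<and> Dirichlet N f \<le> c / real N}.
    ereal (\<Sum>\<eta>\<in>Omega N. \<bar>g \<eta>\<bar> * f \<eta> * (1/3)^N))"
  using is_density_uniform[of N] Dirichlet_const[of N] assms
  by (intro order.trans[OF _ SUP_upper[where i="\<lambda>_. 1 / (real (card (Omega N)) * (1/3)^N)"]])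
    (auto intro!: sum_nonneg simp: is_density_def)

lemma tendsto_inverse_box_size: "(\<lambda>k::nat. C / (2 * real k + 1)) \<longlonglongrightarrow> 0"
  by (intro tendsto_divide_0[OF tendsto_const] filterlim_at_top_imp_at_infinity
      filterlim_at_top_mono[OF filterlim_real_sequentially]) auto


theorem lemmaA4:
  fixes c :: real and S :: "int set" and \<phi> :: "(int \<Rightarrow> nat) \<Rightarrow> real"
  assumes "c > 0" and "local_fun S \<phi>"
  shows "limsup (\<lambda>k. limsup (\<lambda>N.
            SUP f\<in>{f. is_density N f \<and> Dirichlet N f \<le> c / real N}.
              ereal (\<Sum>\<eta>\<in>Omega N.
                 \<bar>box_avg N k \<phi> \<eta> -
                   phi_tilde S \<phi> (box_density N k 1 \<eta>) (box_density N k 2 \<eta>)\<bar>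
                 * f \<eta> * (1/3)^N))) = 0"
proof -
  define M where "M = phi_norm S \<phi>"
  define R where "R = real (support_spread S)"
  define V where "V = (32 * real (card S) ^ 2 + 2 * R ^ 2) * M\<^sup>2"
  show ?thesis
  proof (rule limsup_limsup_eq_0[where b="\<lambda>k. M * R / (2 * real k + 1) + sqrt (V / (2 * real k + 1))"
        and r="\<lambda>k N. 2 * M * ((2 * real k + 1) * (4 * real k * (2 * sqrt (2 * (c / real N)))))"], goal_cases)
    case (1 k N)
    show ?case using SUP_expectation_nonneg assms(1) by simp
  next
    case (2 k)
    show ?case using expectation_box_error_le[OF assms(2)] unfolding M_def R_def V_def
      by (intro eventually_sequentiallyI[of "2 * k + 1"] SUP_least) auto
  next
    case (3 k)
    have "(\<lambda>N. 2 * M * ((2 * real k + 1) * (4 * real k * (2 * sqrt (2 * (c / real N))))))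
        \<longlonglongrightarrow> 2 * M * ((2 * real k + 1) * (4 * real k * (2 * sqrt (2 * 0))))"
      by (intro tendsto_intros lim_const_over_n)
    then show ?case by simp
  next
    case 4
    show ?case
      using tendsto_add[OF tendsto_inverse_box_size tendsto_real_sqrt[OF tendsto_inverse_box_size]] by simp
  qed
qed

end
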